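(* Consider the two-tubes TFE equations (defined in the context). (A) For every $v<0$ there exist exactly two (up to translation) traveling wave solutions $(c_1,c_2)(y-vt)$ with speed $v$ satisfying $(c_1,c_2)(-\infty)=(-1,-1)$; they connect $(-1,-1)$ to $(-2v-1,-6v-1)$ and $(-1,-1)$ to $(-6v-1,-2v-1)$, respectively. For $v=0$ the only stationary solution $(c_1,c_2)(y)$ satisfying $(c_1,c_2)(-\infty)=(-1,-1)$ is the constant $(c_1,c_2)\equiv(-1,-1)$. For $v>0$ there are no non-constant traveling waves with speed $v$ satisfying $(c_1,c_2)(-\infty)=(-1,-1)$. (B) For every $v>0$ there exist exactly two (up to translation) traveling wave solutions $(c_1,c_2)(y-vt)$ with speed $v$ satisfying $(c_1,c_2)(+\infty)=(1,1)$; they connect $(-2v+1,-6v+1)$ to $(1,1)$ and $(-6v+1,-2v+1)$ to $(1,1)$, respectively. For $v=0$ the only stationary solution $(c_1,c_2)(y)$ satisfying $(c_1,c_2)(+\infty)=(1,1)$ is the constant $(c_1,c_2)\equiv(1,1)$. For $v<0$ there are no non-constant traveling waves with speed $v$ satisfying $(c_1,c_2)(+\infty)=(1,1)$.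
   Context: Two-tubes TFE equations: unknowns $c_1,c_2$, real functions of $(t,y)\in[0,\infty)\times\mathbb{R}$, satisfying $$\partial_t c_1+\partial_y(u_1c_1)-\partial_{yy}c_1=-f,\qquad \partial_t c_2+\partial_y(u_2c_2)-\partial_{yy}c_2=f,$$ with $u_1=(c_2-c_1)/2$, $u_2=-u_1$, and $f=-(\partial_y u_1)\,c_1$ if $\partial_y u_1\le 0$, $f=-(\partial_y u_1)\,c_2$ if $\partial_y u_1\ge0$. A traveling wave with speed $v$ is a solution of the form $(c_1,c_2)(t,y)=\tilde g(y-vt)$ with $\tilde g:\mathbb{R}\to\mathbb{R}^2$ continuous (and smooth enough to solve the equations classically) having limits $\tilde g(\pm\infty)$; it connects $\tilde g(-\infty)$ to $\tilde g(+\infty)$. *)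

theory Defs
  imports "HOL-Analysis.Analysis"
begin

definition pdy :: "(real \<Rightarrow> real \<Rightarrow> real) \<Rightarrow> real \<Rightarrow> real \<Rightarrow> real" where
  "pdy c t y = deriv (\<lambda>z. c t z) y"

definition tfe_u1 :: "(real \<Rightarrow> real \<Rightarrow> real) \<Rightarrow> (real \<Rightarrow> real \<Rightarrow> real) \<Rightarrow> real \<Rightarrow> real \<Rightarrow> real" where
  "tfe_u1 c1 c2 t y = (c2 t y - c1 t y) / 2"

text \<open>Exchange term f: f = -(d_y u1) c1 if d_y u1 <= 0, f = -(d_y u1) c2 if d_y u1 >= 0
  (both branches agree when d_y u1 = 0).\<close>
definition tfe_f :: "(real \<Rightarrow> real \<Rightarrow> real) \<Rightarrow> (real \<Rightarrow> real \<Rightarrow> real) \<Rightarrow> real \<Rightarrow> real \<Rightarrow> real" where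
  "tfe_f c1 c2 t y =
     (let uy = pdy (tfe_u1 c1 c2) t y in
      if uy \<le> 0 then - uy * c1 t y else - uy * c2 t y)"

definition tfe_solution :: "(real \<Rightarrow> real \<Rightarrow> real) \<Rightarrow> (real \<Rightarrow> real \<Rightarrow> real) \<Rightarrow> bool" where
  "tfe_solution c1 c2 \<longleftrightarrow>
     (\<forall>t\<ge>0. \<forall>y.
        (\<lambda>z. c1 t z) differentiable (at y) \<and>
        (\<lambda>z. c2 t z) differentiable (at y) \<and>
        (\<lambda>z. pdy c1 t z) differentiable (at y) \<and>
        (\<lambda>z. pdy c2 t z) differentiable (at y) \<and>
        (\<exists>D1 D2.
           ((\<lambda>s. c1 s y) has_real_derivative D1) (at t within {0..}) \<and>
           ((\<lambda>s. c2 s y) has_real_derivative D2) (at t within {0..}) \<and>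
           D1 + pdy (\<lambda>s z. tfe_u1 c1 c2 s z * c1 s z) t y - pdy (pdy c1) t y
              = - tfe_f c1 c2 t y \<and>
           D2 + pdy (\<lambda>s z. - tfe_u1 c1 c2 s z * c2 s z) t y - pdy (pdy c2) t y
              = tfe_f c1 c2 t y))"

definition traveling_wave :: "real \<Rightarrow> (real \<Rightarrow> real \<times> real) \<Rightarrow> bool" where
  "traveling_wave v g \<longleftrightarrow>
     continuous_on UNIV g \<and>
     (\<exists>L. (g \<longlongrightarrow> L) at_bot) \<and> (\<exists>R. (g \<longlongrightarrow> R) at_top) \<and>
     tfe_solution (\<lambda>t y. fst (g (y - v * t))) (\<lambda>t y. snd (g (y - v * t)))"

definition nonconstant :: "(real \<Rightarrow> real \<times> real) \<Rightarrow> bool" where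
  "nonconstant g \<longleftrightarrow> (\<exists>x y. g x \<noteq> g y)"

end

theory Submission
  imports Defs "HOL-Real_Asymp.Real_Asymp"
begin

text \<open>A traveling wave \<open>(c\<^sub>1, c\<^sub>2)(t, y) = (a, b)(y - v t)\<close> solves the system iff its
  profile solves \<open>a'' = tw_accel v a a' b b'\<close>, \<open>b'' = tw_accel v b b' a a'\<close>. These equations
  are invariant under exchanging the tubes and under \<open>(a, b)(x) \<mapsto> (-a, -b)(-x)\<close>, \<open>v \<mapsto> -v\<close>;
  the latter turns part (B) into part (A).

  For a profile leaving \<open>(-1, -1)\<close>, adding the equations gives the first integral
  \<open>a' + b' = -v (a + b + 2) - (b - a)\<^sup>2 / 2\<close>. The ratio defect \<open>3 a' - b'\<close> satisfies a linear
  equation wherever \<open>a' < b'\<close> (symmetrically for \<open>3 b' - a'\<close>), and a connectedness argument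
  together with the boundedness of the profile shows that for \<open>v \<le> 0\<close> one of the two vanishes
  identically. Then \<open>b = 3 a + 2\<close> (or the same with the tubes exchanged), and \<open>\<alpha> = a + 1\<close>
  solves the logistic equation \<open>\<alpha>' = -v \<alpha> - \<alpha>\<^sup>2 / 2\<close> with \<open>\<alpha>(-\<infinity>) = 0\<close>, whose solutions are
  \<open>\<alpha> = 0\<close> and, for \<open>v < 0\<close> only, the translates of \<open>-2 v / (1 + exp (v x))\<close>. For \<open>v > 0\<close> the
  energy \<open>a'\<^sup>2 + b'\<^sup>2\<close> grows exponentially towards \<open>-\<infinity>\<close> unless the profile is at rest,
  contradicting the boundedness of \<open>b - a\<close>.\<close>

lemma gronwall_forward_vanishing:
  fixes f f' :: "real \<Rightarrow> real"
  assumes "x0 \<le> x"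
    and deriv: "\<And>y. y \<in> {x0..x} \<Longrightarrow> (f has_real_derivative f' y) (at y)"
    and bound: "\<And>y. y \<in> {x0..x} \<Longrightarrow> f' y \<le> K * f y"
    and "f x0 = 0" "0 \<le> f x"
  shows "f x = 0"
proof -
  have "f x * exp (- K * x) \<le> f x0 * exp (- K * x0)"
  proof (rule deriv_nonpos_imp_antimono[OF _ _ \<open>x0 \<le> x\<close>])
    fix y assume y: "y \<in> {x0..x}"
    show "((\<lambda>y. f y * exp (- K * y)) has_real_derivative (f' y - K * f y) * exp (- K * y)) (at y)"
      using deriv[OF y] by (auto intro!: derivative_eq_intros simp: algebra_simps)
    show "(f' y - K * f y) * exp (- K * y) \<le> 0"
      using bound[OF y] by (simp add: mult_nonpos_nonneg)
  qed
  then show ?thesis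
    using assms(4,5) by (simp add: mult_le_0_iff)
qed

lemma gronwall_vanishing:
  fixes f f' :: "real \<Rightarrow> real" and I :: "real set"
  assumes I: "is_interval I"
    and deriv: "\<And>y. y \<in> I \<Longrightarrow> (f has_real_derivative f' y) (at y)"
    and bound: "\<And>y. y \<in> I \<Longrightarrow> \<bar>f' y\<bar> \<le> K * f y"
    and nonneg: "\<And>y. y \<in> I \<Longrightarrow> 0 \<le> f y"
    and "x0 \<in> I" "f x0 = 0" "x \<in> I"
  shows "f x = 0"
proof (cases "x0 \<le> x")
  case True
  show ?thesis
  proof (rule gronwall_forward_vanishing[of x0 x f f' K])
    fix y assume "y \<in> {x0..x}"
    then have "y \<in> I"
      using mem_is_interval_1_I[OF I \<open>x0 \<in> I\<close> \<open>x \<in> I\<close>] by auto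
    then show "(f has_real_derivative f' y) (at y)" "f' y \<le> K * f y"
      using deriv[of y] bound[of y] by auto
  qed (fact True, fact \<open>f x0 = 0\<close>, rule nonneg[OF \<open>x \<in> I\<close>])
next
  case False
  have "(\<lambda>y. f (- y)) (- x) = 0"
  proof (rule gronwall_forward_vanishing[of "- x0" "- x" _ "\<lambda>y. - f' (- y)" K])
    fix y assume "y \<in> {- x0..- x}"
    then have "- y \<in> I"
      using mem_is_interval_1_I[OF I \<open>x \<in> I\<close> \<open>x0 \<in> I\<close>] by auto
    then show "((\<lambda>y. f (- y)) has_real_derivative - f' (- y)) (at y)"
      using deriv DERIV_mirror by blast
    show "- f' (- y) \<le> K * f (- y)"
      using bound[OF \<open>- y \<in> I\<close>] by linarith
  qed (use False \<open>f x0 = 0\<close> nonneg[OF \<open>x \<in> I\<close>] in simp_all)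
  then show ?thesis
    by simp
qed

lemma first_zero_after_pos:
  fixes g :: "real \<Rightarrow> real"
  assumes cont: "continuous_on {a..b} g" and "0 < g a" "g b \<le> 0" "a \<le> b"
  obtains t where "a < t" "t \<le> b" "g t = 0" "\<And>s. a \<le> s \<Longrightarrow> s < t \<Longrightarrow> 0 < g s"
proof -
  define S where "S = {a..b} \<inter> g -` {..0}"
  have "closed S"
    unfolding S_def by (rule continuous_closed_preimage[OF cont]) auto
  then have "compact S"
    unfolding compact_eq_bounded_closed S_def
    using bounded_subset[OF bounded_closed_interval] by blast
  moreover have "b \<in> S"
    using assms by (auto simp: S_def)
  ultimately obtain t where t: "t \<in> S" "\<And>s. s \<in> S \<Longrightarrow> t \<le> s"
    using compact_attains_inf[of S] by blast
  then have "a \<le> t" "t \<le> b" "g t \<le> 0"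
    by (auto simp: S_def)
  then have "a < t"
    using \<open>0 < g a\<close> by (cases "a = t") auto
  have pos: "0 < g s" if "a \<le> s" "s < t" for s
  proof (rule ccontr)
    assume "\<not> 0 < g s"
    then have "s \<in> S"
      using that \<open>t \<le> b\<close> by (auto simp: S_def)
    then show False
      using t(2)[of s] that by linarith
  qed
  obtain z where z: "a \<le> z" "z \<le> t" "g z = 0"
    using IVT2'[of g t 0 a] \<open>g t \<le> 0\<close> \<open>0 < g a\<close> \<open>a < t\<close> \<open>t \<le> b\<close>
      continuous_on_subset[OF cont, of "{a..t}"] by auto
  have "z = t"
  proof (rule ccontr)
    assume "z \<noteq> t"
    with z have "z < t"
      by simp
    with pos[of z] z show False
      by simp
  qed
  with z have "g t = 0"
    by simp
  with \<open>a < t\<close> \<open>t \<le> b\<close> show thesis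
    using that pos by blast
qed

lemma bounded_range_if_tendsto_at_bot_at_top:
  fixes f :: "real \<Rightarrow> 'a::real_normed_vector"
  assumes cont: "continuous_on UNIV f" and "(f \<longlongrightarrow> L) at_bot" "(f \<longlongrightarrow> R) at_top"
  shows "bounded (range f)"
proof -
  obtain X1 where X1: "\<And>x. x \<le> X1 \<Longrightarrow> dist (f x) L < 1"
    using tendstoD[OF assms(2), of 1] by (auto simp: eventually_at_bot_linorder)
  obtain X2 where X2: "\<And>x. X2 \<le> x \<Longrightarrow> dist (f x) R < 1"
    using tendstoD[OF assms(3), of 1] by (auto simp: eventually_at_top_linorder)
  have "bounded (f ` {X1..X2})"
    by (intro compact_imp_bounded compact_continuous_image continuous_on_subset[OF cont]) auto
  then obtain M0 where M0: "\<And>y. y \<in> f ` {X1..X2} \<Longrightarrow> norm y \<le> M0"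
    unfolding bounded_iff by blast
  have "norm (f x) \<le> max M0 (max (norm L + 1) (norm R + 1))" for x
  proof -
    consider "x \<le> X1" | "X2 \<le> x" | "x \<in> {X1..X2}"
      by fastforce
    then show ?thesis
    proof cases
      case 1
      then show ?thesis
        using X1[of x] norm_triangle_ineq2[of "f x" L] by (auto simp: dist_norm)
    next
      case 2
      then show ?thesis
        using X2[of x] norm_triangle_ineq2[of "f x" R] by (auto simp: dist_norm)
    qed (use M0 in force)
  qed
  then show ?thesis
    unfolding bounded_iff by blast
qed

lemma tendsto_deriv_at_top_eq_0:
  fixes f f' :: "real \<Rightarrow> real"
  assumes deriv: "\<And>x. (f has_real_derivative f' x) (at x)"
    and "(f \<longlongrightarrow> L) at_top" "(f' \<longlongrightarrow> k) at_top"
  shows "k = 0"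
proof (rule ccontr)
  assume "k \<noteq> 0"
  obtain X1 where X1: "\<And>x. X1 \<le> x \<Longrightarrow> \<bar>f' x - k\<bar> < \<bar>k\<bar> / 2"
    using tendstoD[OF assms(3), of "\<bar>k\<bar> / 2"] \<open>k \<noteq> 0\<close>
    by (auto simp: eventually_at_top_linorder dist_real_def)
  obtain X2 where X2: "\<And>x. X2 \<le> x \<Longrightarrow> \<bar>f x - L\<bar> < \<bar>k\<bar> / 4"
    using tendstoD[OF assms(2), of "\<bar>k\<bar> / 4"] \<open>k \<noteq> 0\<close>
    by (auto simp: eventually_at_top_linorder dist_real_def)
  define x where "x = max X1 X2"
  obtain z where "x < z" "f (x + 1) - f x = f' z"
    using MVT2[of x "x + 1" f f'] deriv by auto
  moreover have "\<bar>f' z - k\<bar> < \<bar>k\<bar> / 2"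
    using X1[of z] \<open>x < z\<close> by (simp add: x_def)
  moreover have "\<bar>f (x + 1) - L\<bar> < \<bar>k\<bar> / 4" "\<bar>f x - L\<bar> < \<bar>k\<bar> / 4"
    using X2[of x] X2[of "x + 1"] by (auto simp: x_def)
  moreover have "\<bar>f (x + 1) - f x\<bar> \<le> \<bar>f (x + 1) - L\<bar> + \<bar>f x - L\<bar>"
    using abs_triangle_ineq4[of "f (x + 1) - L" "f x - L"] by simp
  moreover have "\<bar>k\<bar> \<le> \<bar>f' z\<bar> + \<bar>f' z - k\<bar>"
    using abs_triangle_ineq4[of "f' z" "f' z - k"] by simp
  ultimately show False
    by linarith
qed

lemma tendsto_deriv_at_bot_eq_0:
  fixes f f' :: "real \<Rightarrow> real"
  assumes deriv: "\<And>x. (f has_real_derivative f' x) (at x)"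
    and "(f \<longlongrightarrow> L) at_bot" "(f' \<longlongrightarrow> k) at_bot"
  shows "k = 0"
proof -
  have "((\<lambda>x. f (- x)) has_real_derivative - f' (- x)) (at x)" for x
    using deriv DERIV_mirror by blast
  moreover have "((\<lambda>x. f (- x)) \<longlongrightarrow> L) at_top" "((\<lambda>x. - f' (- x)) \<longlongrightarrow> - k) at_top"
    using assms(2,3) by (auto simp: filterlim_at_bot_mirror intro: tendsto_minus)
  ultimately have "- k = 0"
    by (rule tendsto_deriv_at_top_eq_0)
  then show ?thesis
    by simp
qed

lemma small_deriv_if_bounded:
  fixes f f' :: "real \<Rightarrow> real"
  assumes deriv: "\<And>z. (f has_real_derivative f' z) (at z)"
    and bounded: "\<And>z. \<bar>f z\<bar> \<le> M" and "0 < c"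
  obtains z where "x < z" "z < x + (2 * M + 1) / c" "\<bar>f' z\<bar> < c"
proof -
  define y where "y = x + (2 * M + 1) / c"
  have "0 \<le> M"
    using bounded[of x] by linarith
  then have "x < y"
    using \<open>0 < c\<close> by (simp add: y_def)
  then obtain z where z: "x < z" "z < y" "f y - f x = (y - x) * f' z"
    using MVT2[of x y f f'] deriv by blast
  have "\<bar>(y - x) * f' z\<bar> \<le> 2 * M"
    using z(3) bounded[of x] bounded[of y] by (smt (verit))
  have "\<bar>f' z\<bar> < c"
  proof (rule ccontr)
    assume "\<not> \<bar>f' z\<bar> < c"
    then have "(y - x) * c \<le> \<bar>(y - x) * f' z\<bar>"
      using \<open>x < y\<close> by (simp add: abs_mult)
    moreover have "(y - x) * c = 2 * M + 1"
      using \<open>0 < c\<close> by (simp add: y_def)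
    ultimately show False
      using \<open>\<bar>(y - x) * f' z\<bar> \<le> 2 * M\<close> by linarith
  qed
  with z show thesis
    using that y_def by blast
qed

lemma sign_cases_if_continuous_nonvanishing:
  fixes f :: "real \<Rightarrow> real"
  assumes "continuous_on UNIV f" and nonzero: "\<And>x. f x \<noteq> 0"
  shows "(\<forall>x. 0 < f x) \<or> (\<forall>x. f x < 0)"
proof (rule ccontr)
  assume "\<not> ?thesis"
  with nonzero obtain p q where "f p < 0" "0 < f q"
    by (metis linorder_neqE_linordered_idom)
  moreover have "connected (range f)"
    using assms(1) by (intro connected_continuous_image) auto
  ultimately have "0 \<in> range f"
    using connected_iff_interval[of "range f"] by (metis less_imp_le rangeI)
  with nonzero show False
    by auto
qed

lemma backward_growth_if_deriv_le:
  fixes N N' :: "real \<Rightarrow> real"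
  assumes "0 \<le> v" "y \<le> X"
    and deriv: "\<And>x. x \<le> X \<Longrightarrow> (N has_real_derivative N' x) (at x)"
    and decay: "\<And>x. x \<le> X \<Longrightarrow> N' x \<le> - v * N x" and nonneg: "\<And>x. 0 \<le> N x"
  shows "N X + v * N X * (X - y) \<le> N y"
proof -
  have mono: "N X \<le> N z" if "z \<le> X" for z
  proof (rule deriv_nonpos_imp_antimono[OF deriv _ that])
    fix r assume "r \<in> {z..X}"
    moreover have "0 \<le> v * N r"
      using \<open>0 \<le> v\<close> nonneg[of r] by simp
    ultimately show "N' r \<le> 0"
      using decay[of r] by simp
  qed simp
  have "N X + v * N X * X \<le> N y + v * N X * y"
  proof (rule deriv_nonpos_imp_antimono[of y X "\<lambda>z. N z + v * N X * z" "\<lambda>z. N' z + v * N X"])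
    fix z assume z: "z \<in> {y..X}"
    then show "((\<lambda>z. N z + v * N X * z) has_real_derivative N' z + v * N X) (at z)"
      by (auto intro!: derivative_eq_intros deriv)
    have "v * N X \<le> v * N z"
      using mono[of z] z \<open>0 \<le> v\<close> by (simp add: mult_left_mono)
    then show "N' z + v * N X \<le> 0"
      using decay[of z] z by simp
  qed (use \<open>y \<le> X\<close> in simp)
  then show ?thesis
    by (simp add: algebra_simps)
qed

lemma open_closed_real_cases:
  fixes S :: "'a::real_normed_vector set"
  assumes "closed S" and "\<And>x. x \<in> S \<Longrightarrow> eventually (\<lambda>y. y \<in> S) (nhds x)"
  shows "S = {} \<or> S = UNIV"
proof -
  have "open S"
  proof (rule open_subopen[THEN iffD2], intro ballI)
    fix x assume "x \<in> S"
    then obtain T where "open T" "x \<in> T" "\<forall>y\<in>T. y \<in> S"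
      using assms(2) unfolding eventually_nhds by blast
    then show "\<exists>T. open T \<and> x \<in> T \<and> T \<subseteq> S"
      by blast
  qed
  with assms(1) show ?thesis
    using clopen by blast
qed

section \<open>The profile equations\<close>

text \<open>In the moving frame \<open>x = y - v t\<close> the equation for \<open>c\<^sub>1\<close> reads \<open>a'' = tw_accel v a a' b b'\<close>.
  The system is symmetric under exchanging the tubes (\<open>u\<^sub>1 \<leftrightarrow> u\<^sub>2\<close>, \<open>f \<leftrightarrow> -f\<close>), so the equation for
  \<open>c\<^sub>2\<close> is the same with \<open>a\<close> and \<open>b\<close> exchanged.\<close>

definition tw_accel :: "real \<Rightarrow> real \<Rightarrow> real \<Rightarrow> real \<Rightarrow> real \<Rightarrow> real" where
  "tw_accel v a a' b b' = ((b - a) / 2 - v) * a' - (if b' \<le> a' then 0 else (b - a) * (b' - a') / 2)"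

definition wave_ode ::
  "real \<Rightarrow> (real \<Rightarrow> real) \<Rightarrow> (real \<Rightarrow> real) \<Rightarrow> (real \<Rightarrow> real) \<Rightarrow>
    (real \<Rightarrow> real) \<Rightarrow> (real \<Rightarrow> real) \<Rightarrow> (real \<Rightarrow> real) \<Rightarrow> bool" where
  "wave_ode v a a' a'' b b' b'' \<longleftrightarrow>
    (\<forall>x. (a has_real_derivative a' x) (at x) \<and> (a' has_real_derivative a'' x) (at x) \<and>
         (b has_real_derivative b' x) (at x) \<and> (b' has_real_derivative b'' x) (at x) \<and>
         a'' x = tw_accel v (a x) (a' x) (b x) (b' x) \<and>
         b'' x = tw_accel v (b x) (b' x) (a x) (a' x))"

lemma wave_ode_swap: "wave_ode v a a' a'' b b' b'' \<Longrightarrow> wave_ode v b b' b'' a a' a''"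
  unfolding wave_ode_def by blast

lemma tw_accel_reflect: "tw_accel (- v) (- a) a' (- b) b' = - tw_accel v a a' b b'"
  unfolding tw_accel_def by (cases "b' \<le> a'") (simp_all add: field_simps)

lemma wave_ode_reflect:
  assumes "wave_ode v a a' a'' b b' b''"
  shows "wave_ode (- v) (\<lambda>x. - a (- x)) (\<lambda>x. a' (- x)) (\<lambda>x. - a'' (- x))
    (\<lambda>x. - b (- x)) (\<lambda>x. b' (- x)) (\<lambda>x. - b'' (- x))"
proof -
  have mirror: "((\<lambda>x. f (- x)) has_real_derivative - f' (- x)) (at x)"
    if "\<And>x. (f has_real_derivative f' x) (at x)" for f f' :: "real \<Rightarrow> real" and x
    using that DERIV_mirror by blast
  have neg_mirror: "((\<lambda>x. - f (- x)) has_real_derivative f' (- x)) (at x)"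
    if "\<And>x. (f has_real_derivative f' x) (at x)" for f f' :: "real \<Rightarrow> real" and x
    using DERIV_minus[OF mirror[OF that]] by simp
  have da: "\<And>x. (a has_real_derivative a' x) (at x)" and da': "\<And>x. (a' has_real_derivative a'' x) (at x)"
    and db: "\<And>x. (b has_real_derivative b' x) (at x)" and db': "\<And>x. (b' has_real_derivative b'' x) (at x)"
    using assms unfolding wave_ode_def by blast+
  show ?thesis
    unfolding wave_ode_def
  proof (intro allI conjI)
    fix x
    show "((\<lambda>x. - a (- x)) has_real_derivative a' (- x)) (at x)"
      "((\<lambda>x. - b (- x)) has_real_derivative b' (- x)) (at x)"
      using neg_mirror[OF da] neg_mirror[OF db] .
    show "((\<lambda>x. a' (- x)) has_real_derivative - a'' (- x)) (at x)"
      "((\<lambda>x. b' (- x)) has_real_derivative - b'' (- x)) (at x)"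
      using mirror[OF da'] mirror[OF db'] .
    show "- a'' (- x) = tw_accel (- v) (- a (- x)) (a' (- x)) (- b (- x)) (b' (- x))"
      "- b'' (- x) = tw_accel (- v) (- b (- x)) (b' (- x)) (- a (- x)) (a' (- x))"
      using assms by (simp_all add: wave_ode_def tw_accel_reflect)
  qed
qed

lemma has_real_derivative_shift:
  fixes f f' :: "real \<Rightarrow> real"
  assumes "\<And>x. (f has_real_derivative f' x) (at x)"
  shows "((\<lambda>z. f (z - c)) has_real_derivative f' (y - c)) (at y)"
  using DERIV_shift[of f "f' (y - c)" y "- c"] assms by simp

lemma pdy_traveling:
  assumes "\<And>x. (f has_real_derivative f' x) (at x)"
  shows "pdy (\<lambda>t y. f (y - v * t)) t = (\<lambda>y. f' (y - v * t))"
  unfolding pdy_def by (auto intro!: DERIV_imp_deriv has_real_derivative_shift assms)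

lemma traveling_time_deriv:
  assumes "\<And>x. (f has_real_derivative f' x) (at x)"
  shows "((\<lambda>s. f (y - v * s)) has_real_derivative - v * f' (y - v * t)) (at t)"
proof -
  have "((\<lambda>s. y - v * s) has_real_derivative - v) (at t)"
    by (auto intro!: derivative_eq_intros)
  from DERIV_chain2[OF assms this] show ?thesis
    by (simp add: mult.commute)
qed

lemma tfe_traveling_frame:
  fixes a a' a'' b b' b'' :: "real \<Rightarrow> real" and v t y :: real
  assumes a: "\<And>x. (a has_real_derivative a' x) (at x)"
    and a': "\<And>x. (a' has_real_derivative a'' x) (at x)"
    and b: "\<And>x. (b has_real_derivative b' x) (at x)"
    and b': "\<And>x. (b' has_real_derivative b'' x) (at x)"
  defines "c1 \<equiv> \<lambda>t y. a (y - v * t)" and "c2 \<equiv> \<lambda>t y. b (y - v * t)" and "x \<equiv> y - v * t"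
  shows "- v * a' x + pdy (\<lambda>s z. tfe_u1 c1 c2 s z * c1 s z) t y - pdy (pdy c1) t y = - tfe_f c1 c2 t y
      \<longleftrightarrow> a'' x = tw_accel v (a x) (a' x) (b x) (b' x)"
    and "- v * b' x + pdy (\<lambda>s z. - tfe_u1 c1 c2 s z * c2 s z) t y - pdy (pdy c2) t y = tfe_f c1 c2 t y
      \<longleftrightarrow> b'' x = tw_accel v (b x) (b' x) (a x) (a' x)"
proof -
  have pdy1: "pdy c1 t = (\<lambda>y. a' (y - v * t))" "pdy c2 t = (\<lambda>y. b' (y - v * t))"
    unfolding c1_def c2_def using pdy_traveling a b by blast+
  have pdy2: "pdy (pdy c1) t y = a'' x" "pdy (pdy c2) t y = b'' x"
    unfolding pdy_def[of "pdy _"] pdy1 x_def by (auto intro!: DERIV_imp_deriv has_real_derivative_shift a' b')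
  have sa: "((\<lambda>z. a (z - v * t)) has_real_derivative a' x) (at y)"
    and sb: "((\<lambda>z. b (z - v * t)) has_real_derivative b' x) (at y)"
    unfolding x_def by (intro has_real_derivative_shift a b)+
  have u: "pdy (tfe_u1 c1 c2) t y = (b' x - a' x) / 2"
    unfolding pdy_def tfe_u1_def c1_def c2_def
    by (rule DERIV_imp_deriv) (auto intro!: derivative_eq_intros sa sb)
  have flux1: "pdy (\<lambda>s z. tfe_u1 c1 c2 s z * c1 s z) t y
      = (b' x - a' x) / 2 * a x + (b x - a x) / 2 * a' x"
    unfolding pdy_def tfe_u1_def c1_def c2_def
    by (rule DERIV_imp_deriv) (auto intro!: derivative_eq_intros sa sb simp: x_def)
  have flux2: "pdy (\<lambda>s z. - tfe_u1 c1 c2 s z * c2 s z) t y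
      = - ((b' x - a' x) / 2 * b x + (b x - a x) / 2 * b' x)"
    unfolding pdy_def tfe_u1_def c1_def c2_def
    by (rule DERIV_imp_deriv) (auto intro!: derivative_eq_intros sa sb simp: x_def, simp add: field_simps)
  have f: "tfe_f c1 c2 t y = (a' x - b' x) / 2 * (if b' x \<le> a' x then a x else b x)"
    unfolding tfe_f_def u by (simp add: c1_def c2_def x_def[symmetric]) (simp add: algebra_simps)
  show "- v * a' x + pdy (\<lambda>s z. tfe_u1 c1 c2 s z * c1 s z) t y - pdy (pdy c1) t y = - tfe_f c1 c2 t y
      \<longleftrightarrow> a'' x = tw_accel v (a x) (a' x) (b x) (b' x)"
    unfolding flux1 pdy2 f tw_accel_def by (cases "b' x \<le> a' x") (auto simp: field_simps)
  show "- v * b' x + pdy (\<lambda>s z. - tfe_u1 c1 c2 s z * c2 s z) t y - pdy (pdy c2) t y = tfe_f c1 c2 t y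
      \<longleftrightarrow> b'' x = tw_accel v (b x) (b' x) (a x) (a' x)"
    unfolding flux2 pdy2 f tw_accel_def
    by (cases "b' x \<le> a' x"; cases "a' x \<le> b' x") (auto simp: field_simps)
qed

lemma tfe_solution_if_profile_equations:
  fixes a a' a'' b b' b'' :: "real \<Rightarrow> real"
  assumes a: "\<And>x. (a has_real_derivative a' x) (at x)"
    and a': "\<And>x. (a' has_real_derivative a'' x) (at x)"
    and b: "\<And>x. (b has_real_derivative b' x) (at x)"
    and b': "\<And>x. (b' has_real_derivative b'' x) (at x)"
    and eqs: "\<And>x. a'' x = tw_accel v (a x) (a' x) (b x) (b' x) \<and> b'' x = tw_accel v (b x) (b' x) (a x) (a' x)"
  shows "tfe_solution (\<lambda>t y. a (y - v * t)) (\<lambda>t y. b (y - v * t))" (is "tfe_solution ?c1 ?c2")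
  unfolding tfe_solution_def
proof (intro allI impI conjI)
  fix t y :: real
  show "(\<lambda>z. ?c1 t z) differentiable (at y)" "(\<lambda>z. ?c2 t z) differentiable (at y)"
    "(\<lambda>z. pdy ?c1 t z) differentiable (at y)" "(\<lambda>z. pdy ?c2 t z) differentiable (at y)"
    unfolding pdy_traveling[OF a] pdy_traveling[OF b] real_differentiable_def
    using has_real_derivative_shift[OF a] has_real_derivative_shift[OF a']
      has_real_derivative_shift[OF b] has_real_derivative_shift[OF b']
    by blast+
  show "\<exists>D1 D2. ((\<lambda>s. ?c1 s y) has_real_derivative D1) (at t within {0..}) \<and>
      ((\<lambda>s. ?c2 s y) has_real_derivative D2) (at t within {0..}) \<and>
      D1 + pdy (\<lambda>s z. tfe_u1 ?c1 ?c2 s z * ?c1 s z) t y - pdy (pdy ?c1) t y = - tfe_f ?c1 ?c2 t y \<and>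
      D2 + pdy (\<lambda>s z. - tfe_u1 ?c1 ?c2 s z * ?c2 s z) t y - pdy (pdy ?c2) t y = tfe_f ?c1 ?c2 t y"
    using tfe_traveling_frame[OF a a' b b', where v=v and t=t and y=y] eqs
      traveling_time_deriv[OF a, where y=y and v=v and t=t]
      traveling_time_deriv[OF b, where y=y and v=v and t=t]
    by (blast intro: has_field_derivative_at_within)
qed

lemma profile_equations_if_tfe_solution:
  fixes a a' a'' b b' b'' :: "real \<Rightarrow> real"
  assumes a: "\<And>x. (a has_real_derivative a' x) (at x)"
    and a': "\<And>x. (a' has_real_derivative a'' x) (at x)"
    and b: "\<And>x. (b has_real_derivative b' x) (at x)"
    and b': "\<And>x. (b' has_real_derivative b'' x) (at x)"
    and sol: "tfe_solution (\<lambda>t y. a (y - v * t)) (\<lambda>t y. b (y - v * t))" (is "tfe_solution ?c1 ?c2")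
  shows "a'' x = tw_accel v (a x) (a' x) (b x) (b' x) \<and> b'' x = tw_accel v (b x) (b' x) (a x) (a' x)"
proof -
  obtain D1 D2 where
    D1: "((\<lambda>s. ?c1 s x) has_real_derivative D1) (at 0 within {0..})" and
    D2: "((\<lambda>s. ?c2 s x) has_real_derivative D2) (at 0 within {0..})" and
    eq1: "D1 + pdy (\<lambda>s z. tfe_u1 ?c1 ?c2 s z * ?c1 s z) 0 x - pdy (pdy ?c1) 0 x = - tfe_f ?c1 ?c2 0 x" and
    eq2: "D2 + pdy (\<lambda>s z. - tfe_u1 ?c1 ?c2 s z * ?c2 s z) 0 x - pdy (pdy ?c2) 0 x = tfe_f ?c1 ?c2 0 x"
    using sol unfolding tfe_solution_def by blast
  have nontrivial: "at (0::real) within {0..} \<noteq> bot"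
    by (simp add: at_within_Ici_at_right)
  have "((\<lambda>s. ?c1 s x) has_real_derivative - v * a' x) (at 0 within {0..})"
    "((\<lambda>s. ?c2 s x) has_real_derivative - v * b' x) (at 0 within {0..})"
    using traveling_time_deriv[OF a, where y=x and v=v and t=0]
      traveling_time_deriv[OF b, where y=x and v=v and t=0]
    by (simp_all add: has_field_derivative_at_within)
  then have "D1 = - v * a' x" "D2 = - v * b' x"
    using has_field_derivative_unique[OF D1 _ nontrivial] has_field_derivative_unique[OF D2 _ nontrivial]
    by simp_all
  with eq1 eq2 tfe_traveling_frame[OF a a' b b', where v=v and t=0 and y=x] show ?thesis
    by simp
qed

lemma traveling_wave_imp_wave_ode:
  assumes "traveling_wave v g"
  defines "a \<equiv> \<lambda>x. fst (g x)" and "b \<equiv> \<lambda>x. snd (g x)"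
  shows "wave_ode v a (deriv a) (deriv (deriv a)) b (deriv b) (deriv (deriv b))"
proof -
  have sol: "tfe_solution (\<lambda>t y. a (y - v * t)) (\<lambda>t y. b (y - v * t))"
    using assms(1) by (simp add: traveling_wave_def a_def b_def)
  have "a differentiable (at x) \<and> b differentiable (at x) \<and>
      deriv a differentiable (at x) \<and> deriv b differentiable (at x)" for x
    using sol[unfolded tfe_solution_def, rule_format, of 0 x] by (simp add: pdy_def[abs_def])
  then have derivs: "(a has_real_derivative deriv a x) (at x)"
      "(deriv a has_real_derivative deriv (deriv a) x) (at x)"
      "(b has_real_derivative deriv b x) (at x)"
      "(deriv b has_real_derivative deriv (deriv b) x) (at x)" for x
    by (simp_all add: DERIV_deriv_iff_real_differentiable)
  with profile_equations_if_tfe_solution[OF derivs sol] show ?thesis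
    unfolding wave_ode_def by blast
qed

lemma wave_ode_imp_traveling_wave:
  assumes ode: "wave_ode v (\<lambda>x. fst (g x)) a' a'' (\<lambda>x. snd (g x)) b' b''"
    and "(g \<longlongrightarrow> L) at_bot" "(g \<longlongrightarrow> R) at_top"
  shows "traveling_wave v g"
proof -
  have derivs: "((\<lambda>x. fst (g x)) has_real_derivative a' x) (at x)"
      "(a' has_real_derivative a'' x) (at x)"
      "((\<lambda>x. snd (g x)) has_real_derivative b' x) (at x)"
      "(b' has_real_derivative b'' x) (at x)" for x
    using ode unfolding wave_ode_def by blast+
  have "continuous_on UNIV (\<lambda>x. (fst (g x), snd (g x)))"
    using derivs(1,3) by (intro continuous_on_Pair continuous_at_imp_continuous_on ballI DERIV_isCont)
  moreover have "tfe_solution (\<lambda>t y. fst (g (y - v * t))) (\<lambda>t y. snd (g (y - v * t)))"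
    using ode unfolding wave_ode_def by (intro tfe_solution_if_profile_equations[OF derivs]) blast
  ultimately show ?thesis
    using assms(2,3) unfolding traveling_wave_def by (simp del: split_paired_Ex) blast
qed

lemma tw_accel_sum:
  "tw_accel v a a' b b' + tw_accel v b b' a a' = - v * (a' + b') - (b - a) * (b' - a')"
  unfolding tw_accel_def by (rule linorder_cases[of a' b']) (simp_all add: field_simps)

lemma tw_accel_ratio_defect:
  "3 * tw_accel v a a' b b' - tw_accel v b b' a a'
    = (b - a - v) * (3 * a' - b') + (if b' \<le> a' then 2 * (b - a) * (b' - a') else 0)"
  unfolding tw_accel_def by (rule linorder_cases[of a' b']) (simp_all add: field_simps)

lemma tw_accel_tie: "tw_accel v b a' a a' - tw_accel v a a' b a' = (a - b) * a'"
  unfolding tw_accel_def by (simp add: field_simps)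

lemma tw_accel_bound: "\<bar>tw_accel v a a' b b' + v * a'\<bar> \<le> \<bar>b - a\<bar> * (\<bar>a'\<bar> + \<bar>b'\<bar>)"
proof -
  have "tw_accel v a a' b b' + v * a' = (b - a) * (if b' \<le> a' then a' / 2 else a' - b' / 2)"
    unfolding tw_accel_def by (simp add: field_simps)
  moreover have "\<bar>if b' \<le> a' then a' / 2 else a' - b' / 2\<bar> \<le> \<bar>a'\<bar> + \<bar>b'\<bar>"
    by auto
  ultimately show ?thesis
    by (simp add: abs_mult mult_left_mono)
qed

lemma abs_sum_sq_deriv_le:
  fixes p q p' q' K :: real
  assumes "\<bar>p'\<bar> \<le> K * (\<bar>p\<bar> + \<bar>q\<bar>)" "\<bar>q'\<bar> \<le> K * (\<bar>p\<bar> + \<bar>q\<bar>)" "0 \<le> K"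
  shows "\<bar>2 * p * p' + 2 * q * q'\<bar> \<le> 4 * K * (p\<^sup>2 + q\<^sup>2)"
proof -
  have "\<bar>2 * p * p' + 2 * q * q'\<bar> \<le> 2 * \<bar>p\<bar> * \<bar>p'\<bar> + 2 * \<bar>q\<bar> * \<bar>q'\<bar>"
    by (rule order_trans[OF abs_triangle_ineq]) (simp add: abs_mult)
  also have "\<dots> \<le> 2 * \<bar>p\<bar> * (K * (\<bar>p\<bar> + \<bar>q\<bar>)) + 2 * \<bar>q\<bar> * (K * (\<bar>p\<bar> + \<bar>q\<bar>))"
    using assms by (intro add_mono mult_left_mono) auto
  also have "\<dots> = 2 * K * (\<bar>p\<bar> + \<bar>q\<bar>)\<^sup>2"
    by (simp add: power2_eq_square algebra_simps)
  also have "\<dots> \<le> 2 * K * (2 * (p\<^sup>2 + q\<^sup>2))"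
    using \<open>0 \<le> K\<close> sum_squares_bound[of "\<bar>p\<bar>" "\<bar>q\<bar>"]
    by (intro mult_left_mono) (auto simp: power2_eq_square algebra_simps)
  finally show ?thesis
    by (simp add: algebra_simps)
qed

section \<open>The logistic equation\<close>

lemma logistic_vanishing:
  fixes \<alpha> :: "real \<Rightarrow> real"
  assumes ode: "\<And>x. (\<alpha> has_real_derivative - v * \<alpha> x - (\<alpha> x)\<^sup>2 / 2) (at x)"
    and bounded: "\<And>x. \<bar>\<alpha> x\<bar> \<le> M" and "\<alpha> x0 = 0"
  shows "\<alpha> x = 0"
proof -
  have "(\<alpha> x)\<^sup>2 = 0"
  proof (rule gronwall_vanishing[where I=UNIV and f="\<lambda>x. (\<alpha> x)\<^sup>2"
        and f'="\<lambda>x. (\<alpha> x)\<^sup>2 * (- 2 * v - \<alpha> x)" and K="2 * \<bar>v\<bar> + M" and ?x0.0=x0])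
    fix y :: real
    show "((\<lambda>x. (\<alpha> x)\<^sup>2) has_real_derivative (\<alpha> y)\<^sup>2 * (- 2 * v - \<alpha> y)) (at y)"
      by (auto intro!: derivative_eq_intros ode simp: power2_eq_square algebra_simps)
    have "\<bar>- 2 * v - \<alpha> y\<bar> \<le> 2 * \<bar>v\<bar> + M"
      using bounded[of y] by linarith
    then show "\<bar>(\<alpha> y)\<^sup>2 * (- 2 * v - \<alpha> y)\<bar> \<le> (2 * \<bar>v\<bar> + M) * (\<alpha> y)\<^sup>2"
      by (simp add: abs_mult mult.commute mult_left_mono)
  qed (use \<open>\<alpha> x0 = 0\<close> in auto)
  then show ?thesis
    by simp
qed

lemma logistic_not_neg:
  fixes \<alpha> :: "real \<Rightarrow> real"
  assumes "v \<le> 0" and ode: "\<And>x. (\<alpha> has_real_derivative - v * \<alpha> x - (\<alpha> x)\<^sup>2 / 2) (at x)"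
    and lim: "(\<alpha> \<longlongrightarrow> L) at_top" and neg: "\<And>x. \<alpha> x < 0"
  shows False
proof -
  have factor: "- v * y - y\<^sup>2 / 2 = y * (- v - y / 2)" for y :: real
    by (simp add: power2_eq_square algebra_simps)
  have "- v * \<alpha> x - (\<alpha> x)\<^sup>2 / 2 < 0" for x
    unfolding factor using \<open>v \<le> 0\<close> neg[of x] by (intro mult_neg_pos) auto
  then have "L < \<alpha> 0"
    using ode by (intro DERIV_neg_imp_decreasing_at_top[OF _ lim]) blast
  moreover have "((\<lambda>x. - v * \<alpha> x - (\<alpha> x)\<^sup>2 / 2) \<longlongrightarrow> - v * L - L\<^sup>2 / 2) at_top"
    by (auto intro!: tendsto_intros lim)
  then have "- v * L - L\<^sup>2 / 2 = 0"
    by (rule tendsto_deriv_at_top_eq_0[OF ode lim])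
  moreover have "L * (- v - L / 2) < 0"
    using \<open>L < \<alpha> 0\<close> neg[of 0] \<open>v \<le> 0\<close> by (intro mult_neg_pos) auto
  ultimately show False
    using factor[of L] by linarith
qed

lemma logistic_pos_imp_neg_speed:
  fixes \<alpha> :: "real \<Rightarrow> real"
  assumes ode: "\<And>x. (\<alpha> has_real_derivative - v * \<alpha> x - (\<alpha> x)\<^sup>2 / 2) (at x)"
    and lim: "(\<alpha> \<longlongrightarrow> 0) at_bot" and pos: "\<And>x. 0 < \<alpha> x"
  shows "v < 0"
proof (rule ccontr)
  assume "\<not> v < 0"
  have "((\<lambda>x. - \<alpha> x) has_real_derivative v * \<alpha> x + (\<alpha> x)\<^sup>2 / 2) (at x)" for x
    using DERIV_minus[OF ode[of x]] by (simp add: add.commute)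
  moreover have "0 < v * \<alpha> x + (\<alpha> x)\<^sup>2 / 2" for x
    using \<open>\<not> v < 0\<close> pos[of x] by (simp add: add_nonneg_pos)
  ultimately have "- 0 < - \<alpha> 0"
    by (intro DERIV_pos_imp_increasing_at_bot[OF _ tendsto_minus[OF lim]]) blast
  with pos[of 0] show False
    by simp
qed

lemma logistic_reciprocal:
  fixes \<alpha> :: "real \<Rightarrow> real"
  assumes "v \<noteq> 0" and ode: "\<And>x. (\<alpha> has_real_derivative - v * \<alpha> x - (\<alpha> x)\<^sup>2 / 2) (at x)"
    and nonzero: "\<And>x. \<alpha> x \<noteq> 0"
  obtains C where "\<And>x. 1 / \<alpha> x = (1 + C * exp (v * x)) / (- 2 * v)"
proof -
  define w where "w x = (1 / \<alpha> x + 1 / (2 * v)) * exp (- v * x)" for x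
  have "(w has_real_derivative 0) (at x)" for x
    unfolding w_def using nonzero[of x] \<open>v \<noteq> 0\<close>
    by (auto intro!: derivative_eq_intros ode simp: power2_eq_square field_simps)
  then have w_const: "w x = w 0" for x
    using DERIV_isconst_all by blast
  have "1 / \<alpha> x = (1 + - 2 * v * w 0 * exp (v * x)) / (- 2 * v)" for x
  proof -
    have "(1 / \<alpha> x + 1 / (2 * v)) * exp (- v * x) = w 0"
      using w_const[of x] by (simp add: w_def)
    then have "1 / \<alpha> x + 1 / (2 * v) = w 0 * exp (v * x)"
      by (simp add: exp_minus field_simps)
    then show ?thesis
      using \<open>v \<noteq> 0\<close> by (simp add: field_simps)
  qed
  then show thesis
    by (rule that)
qed

lemma logistic_pos_solution:
  fixes \<alpha> :: "real \<Rightarrow> real"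
  assumes "v < 0" and ode: "\<And>x. (\<alpha> has_real_derivative - v * \<alpha> x - (\<alpha> x)\<^sup>2 / 2) (at x)"
    and lim: "(\<alpha> \<longlongrightarrow> 0) at_bot" and pos: "\<And>x. 0 < \<alpha> x"
  obtains s where "\<And>x. \<alpha> x = - 2 * v / (1 + exp (v * (x + s)))"
proof -
  have "v \<noteq> 0" "\<And>x. \<alpha> x \<noteq> 0"
    using \<open>v < 0\<close> pos[THEN less_imp_neq] by auto
  then obtain C where inv: "\<And>x. 1 / \<alpha> x = (1 + C * exp (v * x)) / (- 2 * v)"
    using logistic_reciprocal[OF _ ode] by blast
  have "0 < C"
  proof (rule ccontr)
    assume "\<not> 0 < C"
    have "- 2 * v \<le> \<alpha> x" for x
    proof -
      have "C * exp (v * x) \<le> 0"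
        using \<open>\<not> 0 < C\<close> by (simp add: mult_nonpos_nonneg)
      then have "(1 + C * exp (v * x)) / (- 2 * v) \<le> 1 / (- 2 * v)"
        using \<open>v < 0\<close> by (intro divide_right_mono) auto
      then have "1 / \<alpha> x \<le> 1 / (- 2 * v)"
        by (simp only: inv)
      then show ?thesis
        using pos[of x] \<open>v < 0\<close> by (simp add: field_simps)
    qed
    then have "- 2 * v \<le> 0"
      by (intro tendsto_lowerbound[OF lim]) auto
    with \<open>v < 0\<close> show False
      by simp
  qed
  show thesis
  proof (rule that[of "ln C / v"])
    fix x
    have "exp (v * (x + ln C / v)) = C * exp (v * x)"
      using \<open>v < 0\<close> \<open>0 < C\<close> by (simp add: distrib_left exp_add)
    moreover have "0 < 1 + C * exp (v * x)"
      using \<open>0 < C\<close> by (simp add: add_pos_pos)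
    ultimately show "\<alpha> x = - 2 * v / (1 + exp (v * (x + ln C / v)))"
      using inv[of x] pos[of x] \<open>v < 0\<close> by (simp add: field_simps)
  qed
qed

lemma logistic_profile_cases:
  fixes \<alpha> :: "real \<Rightarrow> real"
  assumes "v \<le> 0" and ode: "\<And>x. (\<alpha> has_real_derivative - v * \<alpha> x - (\<alpha> x)\<^sup>2 / 2) (at x)"
    and lim_bot: "(\<alpha> \<longlongrightarrow> 0) at_bot" and lim_top: "(\<alpha> \<longlongrightarrow> L) at_top"
  shows "(\<forall>x. \<alpha> x = 0) \<or> (\<exists>s. \<forall>x. \<alpha> x = - 2 * v / (1 + exp (v * (x + s))))"
proof (cases "\<exists>x0. \<alpha> x0 = 0")
  case True
  have cont: "continuous_on UNIV \<alpha>"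
    using ode by (intro continuous_at_imp_continuous_on ballI DERIV_isCont) blast
  obtain M where M: "\<And>x. \<bar>\<alpha> x\<bar> \<le> M"
    using bounded_range_if_tendsto_at_bot_at_top[OF cont lim_bot lim_top]
    by (metis bounded_iff rangeI real_norm_def)
  from True obtain x0 where "\<alpha> x0 = 0"
    by blast
  then have "\<alpha> x = 0" for x
    by (rule logistic_vanishing[OF ode M])
  then show ?thesis
    by blast
next
  case False
  have "continuous_on UNIV \<alpha>"
    using ode by (intro continuous_at_imp_continuous_on ballI DERIV_isCont) blast
  with False have "(\<forall>x. 0 < \<alpha> x) \<or> (\<forall>x. \<alpha> x < 0)"
    by (intro sign_cases_if_continuous_nonvanishing) auto
  then show ?thesis
  proof
    assume pos: "\<forall>x. 0 < \<alpha> x"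
    then have "v < 0"
      using logistic_pos_imp_neg_speed[OF ode lim_bot] by blast
    then obtain s where "\<And>x. \<alpha> x = - 2 * v / (1 + exp (v * (x + s)))"
      using logistic_pos_solution[OF _ ode lim_bot] pos by blast
    then show ?thesis
      by blast
  next
    assume "\<forall>x. \<alpha> x < 0"
    then show ?thesis
      using logistic_not_neg[OF \<open>v \<le> 0\<close> ode lim_top] by blast
  qed
qed

section \<open>Profiles leaving \<open>(-1, -1)\<close>\<close>

definition minus_one_wave :: "real \<Rightarrow> real \<Rightarrow> real \<times> real" where
  "minus_one_wave v x = (-1 - 2 * v / (1 + exp (v * x)), -1 - 6 * v / (1 + exp (v * x)))"

locale wave_from_minus_one =
  fixes v :: real and a a' a'' b b' b'' :: "real \<Rightarrow> real" and A B :: real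
  assumes ode: "wave_ode v a a' a'' b b' b''"
    and a_at_bot: "(a \<longlongrightarrow> -1) at_bot" and b_at_bot: "(b \<longlongrightarrow> -1) at_bot"
    and a_at_top: "(a \<longlongrightarrow> A) at_top" and b_at_top: "(b \<longlongrightarrow> B) at_top"
begin

lemma swap: "wave_from_minus_one v b b' b'' a a' a'' B A"
  using wave_ode_swap[OF ode] a_at_bot b_at_bot a_at_top b_at_top by unfold_locales

lemma a_deriv: "(a has_real_derivative a' x) (at x)"
  and a'_deriv: "(a' has_real_derivative a'' x) (at x)"
  and b_deriv: "(b has_real_derivative b' x) (at x)"
  and b'_deriv: "(b' has_real_derivative b'' x) (at x)"
  and a''_eq: "a'' x = tw_accel v (a x) (a' x) (b x) (b' x)"
  and b''_eq: "b'' x = tw_accel v (b x) (b' x) (a x) (a' x)"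
  using ode unfolding wave_ode_def by blast+

lemma continuous_on_profile [continuous_intros]:
  "continuous_on S a" "continuous_on S a'" "continuous_on S b" "continuous_on S b'"
  using a_deriv a'_deriv b_deriv b'_deriv
  by (auto intro!: continuous_at_imp_continuous_on DERIV_isCont)

lemma bounded_profile:
  obtains M where "\<And>x. \<bar>a x\<bar> \<le> M" "\<And>x. \<bar>b x\<bar> \<le> M"
proof -
  obtain Ma Mb where "\<And>x. \<bar>a x\<bar> \<le> Ma" "\<And>x. \<bar>b x\<bar> \<le> Mb"
    using bounded_range_if_tendsto_at_bot_at_top[OF _ a_at_bot a_at_top]
      bounded_range_if_tendsto_at_bot_at_top[OF _ b_at_bot b_at_top] continuous_on_profile
    by (metis bounded_iff rangeI real_norm_def)
  then have "\<bar>a x\<bar> \<le> max Ma Mb" "\<bar>b x\<bar> \<le> max Ma Mb" for x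
    by (meson max.coboundedI1 max.coboundedI2)+
  then show thesis
    by (rule that)
qed

lemma first_integral: "a' x + b' x = - v * (a x + b x + 2) - (b x - a x)\<^sup>2 / 2"
proof -
  define h where "h x = a' x + b' x + v * (a x + b x + 2) + (b x - a x)\<^sup>2 / 2" for x
  have "(h has_real_derivative 0) (at x)" for x
  proof -
    have "(h has_real_derivative a'' x + b'' x + v * (a' x + b' x) + (b x - a x) * (b' x - a' x)) (at x)"
      unfolding h_def
      by (auto intro!: derivative_eq_intros a_deriv a'_deriv b_deriv b'_deriv
          simp: power2_eq_square field_simps)
    moreover have "a'' x + b'' x = - v * (a' x + b' x) - (b x - a x) * (b' x - a' x)"
      unfolding a''_eq b''_eq by (rule tw_accel_sum)
    ultimately show ?thesis
      by (simp add: algebra_simps)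
  qed
  then have h_const: "h x = h 0" for x
    using DERIV_isconst_all by blast
  have "((\<lambda>x. h 0 - (v * (a x + b x + 2) + (b x - a x)\<^sup>2 / 2))
      \<longlongrightarrow> h 0 - (v * (-1 + -1 + 2) + (-1 - -1)\<^sup>2 / 2)) at_bot"
    by (intro tendsto_intros a_at_bot b_at_bot) simp
  moreover have "h 0 - (v * (a x + b x + 2) + (b x - a x)\<^sup>2 / 2) = a' x + b' x" for x
    using h_const[of x] by (simp add: h_def)
  ultimately have lim: "((\<lambda>x. a' x + b' x) \<longlongrightarrow> h 0) at_bot"
    by simp
  have "((\<lambda>x. a x + b x) has_real_derivative a' x + b' x) (at x)" for x
    by (intro derivative_intros a_deriv b_deriv)
  from tendsto_deriv_at_bot_eq_0[OF this tendsto_add[OF a_at_bot b_at_bot] lim] have "h 0 = 0" .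
  then show ?thesis
    using h_const[of x] by (simp add: h_def)
qed

lemma first_integral_at_top: "- v * (A + B + 2) - (B - A)\<^sup>2 / 2 = 0"
proof -
  have lim: "((\<lambda>x. a' x + b' x) \<longlongrightarrow> - v * (A + B + 2) - (B - A)\<^sup>2 / 2) at_top"
    unfolding first_integral by (auto intro!: tendsto_intros a_at_top b_at_top)
  have "((\<lambda>x. a x + b x) has_real_derivative a' x + b' x) (at x)" for x
    by (intro derivative_intros a_deriv b_deriv)
  from tendsto_deriv_at_top_eq_0[OF this tendsto_add[OF a_at_top b_at_top] lim] show ?thesis .
qed

lemma energy_deriv_bound:
  "\<bar>2 * a' x * a'' x + 2 * b' x * b'' x + 2 * v * ((a' x)\<^sup>2 + (b' x)\<^sup>2)\<bar>
    \<le> 4 * \<bar>b x - a x\<bar> * ((a' x)\<^sup>2 + (b' x)\<^sup>2)"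
proof -
  have "\<bar>a'' x + v * a' x\<bar> \<le> \<bar>b x - a x\<bar> * (\<bar>a' x\<bar> + \<bar>b' x\<bar>)"
    unfolding a''_eq by (rule tw_accel_bound)
  moreover have "\<bar>b'' x + v * b' x\<bar> \<le> \<bar>b x - a x\<bar> * (\<bar>a' x\<bar> + \<bar>b' x\<bar>)"
    using tw_accel_bound[of v "b x" "b' x" "a x" "a' x"]
    unfolding b''_eq by (simp add: abs_minus_commute add.commute)
  ultimately have "\<bar>2 * a' x * (a'' x + v * a' x) + 2 * b' x * (b'' x + v * b' x)\<bar>
      \<le> 4 * \<bar>b x - a x\<bar> * ((a' x)\<^sup>2 + (b' x)\<^sup>2)"
    by (rule abs_sum_sq_deriv_le) simp
  then show ?thesis
    by (simp add: algebra_simps power2_eq_square)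
qed

lemma deriv_vanishing:
  assumes "a' x0 = 0" "b' x0 = 0"
  shows "a' x = 0 \<and> b' x = 0"
proof -
  obtain M where M: "\<And>x. \<bar>a x\<bar> \<le> M" "\<And>x. \<bar>b x\<bar> \<le> M"
    using bounded_profile by blast
  define N where "N x = (a' x)\<^sup>2 + (b' x)\<^sup>2" for x
  have "N x = 0"
  proof (rule gronwall_vanishing[where I=UNIV and f=N
        and f'="\<lambda>x. 2 * a' x * a'' x + 2 * b' x * b'' x" and K="8 * M + 2 * \<bar>v\<bar>" and ?x0.0=x0])
    fix y :: real
    show "(N has_real_derivative 2 * a' y * a'' y + 2 * b' y * b'' y) (at y)"
      unfolding N_def by (auto intro!: derivative_eq_intros a'_deriv b'_deriv)
    have "0 \<le> N y"
      by (simp add: N_def)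
    have "4 * \<bar>b y - a y\<bar> * N y \<le> 8 * M * N y"
      using M[of y] \<open>0 \<le> N y\<close> by (intro mult_right_mono) auto
    moreover have "\<bar>2 * v * N y\<bar> = 2 * \<bar>v\<bar> * N y"
      using \<open>0 \<le> N y\<close> by (simp add: abs_mult)
    ultimately show "\<bar>2 * a' y * a'' y + 2 * b' y * b'' y\<bar> \<le> (8 * M + 2 * \<bar>v\<bar>) * N y"
      using energy_deriv_bound[of y] unfolding N_def[symmetric] by (simp add: algebra_simps)
  qed (use assms in \<open>auto simp: N_def\<close>)
  then show ?thesis
    by (simp add: N_def)
qed

lemma constant_if_rest_point:
  assumes "a' x0 = 0" "b' x0 = 0"
  shows "a x = -1 \<and> b x = -1"
proof -
  have "(a has_real_derivative 0) (at y)" "(b has_real_derivative 0) (at y)" for y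
    using deriv_vanishing[OF assms, of y] a_deriv[of y] b_deriv[of y] by simp_all
  then have "a = (\<lambda>_. a 0)" "b = (\<lambda>_. b 0)"
    using DERIV_isconst_all by (blast intro: ext)+
  then have "a 0 = -1" "b 0 = -1"
    using a_at_bot b_at_bot by (metis tendsto_const_iff trivial_limit_at_bot_linorder)+
  with \<open>a = _\<close> \<open>b = _\<close> show ?thesis
    by (metis)
qed

text \<open>The ratio defect \<open>3 a' - b'\<close> vanishes identically exactly along the profiles with
  \<open>b = 3 a + 2\<close>, such as \<open>minus_one_wave\<close>; \<open>3 b' - a'\<close> plays the same role after exchanging
  the tubes.\<close>


lemma ratio_defect_deriv:
  "((\<lambda>x. 3 * a' x - b' x) has_real_derivative
     (b x - a x - v) * (3 * a' x - b' x) + (if b' x \<le> a' x then 2 * (b x - a x) * (b' x - a' x) else 0))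
   (at x)"
proof -
  have "((\<lambda>x. 3 * a' x - b' x) has_real_derivative 3 * a'' x - b'' x) (at x)"
    by (auto intro!: derivative_eq_intros a'_deriv b'_deriv)
  then show ?thesis
    unfolding a''_eq b''_eq tw_accel_ratio_defect .
qed

lemma ratio_defect_vanishes_near:
  assumes "3 * a' x0 = b' x0" "a' x0 < b' x0"
  shows "eventually (\<lambda>x. 3 * a' x = b' x) (nhds x0)"
proof -
  obtain M where M: "\<And>x. \<bar>a x\<bar> \<le> M" "\<And>x. \<bar>b x\<bar> \<le> M"
    using bounded_profile by blast
  have "open {x. a' x < b' x}"
    by (intro open_Collect_less continuous_on_profile)
  then have "eventually (\<lambda>x. a' x < b' x) (nhds x0)"
    using assms(2) eventually_nhds_in_open by fastforce
  then obtain d where "0 < d" and rising: "\<And>x. x \<in> ball x0 d \<Longrightarrow> a' x < b' x"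
    unfolding eventually_nhds_metric by (auto simp: dist_commute)
  define f where "f x = (3 * a' x - b' x)\<^sup>2" for x
  have "f x = 0" if "x \<in> ball x0 d" for x
  proof (rule gronwall_vanishing[where I="ball x0 d" and f=f
        and f'="\<lambda>x. 2 * (b x - a x - v) * f x" and K="2 * (2 * M + \<bar>v\<bar>)" and ?x0.0=x0])
    fix y assume y: "y \<in> ball x0 d"
    have "((\<lambda>x. 3 * a' x - b' x) has_real_derivative (b y - a y - v) * (3 * a' y - b' y)) (at y)"
      using ratio_defect_deriv[of y] rising[OF y] by simp
    from DERIV_power[OF this, of 2]
    show "(f has_real_derivative 2 * (b y - a y - v) * f y) (at y)"
      unfolding f_def by (rule DERIV_cong) (simp add: power2_eq_square algebra_simps)
    have "\<bar>b y - a y - v\<bar> \<le> 2 * M + \<bar>v\<bar>"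
      using M[of y] by linarith
    then show "\<bar>2 * (b y - a y - v) * f y\<bar> \<le> 2 * (2 * M + \<bar>v\<bar>) * f y"
      by (simp add: f_def abs_mult mult_right_mono)
  qed (use that \<open>0 < d\<close> assms(1) in \<open>auto simp: f_def is_interval_ball_real\<close>)
  then show ?thesis
    unfolding eventually_nhds_metric using \<open>0 < d\<close>
    by (intro exI[of _ d]) (auto simp: f_def dist_commute)
qed

lemma ratio_defect_zero_stable:
  assumes "3 * a' x0 = b' x0" "0 \<le> 3 * b' x0 - a' x0" "a' x0 \<noteq> 0 \<or> b' x0 \<noteq> 0"
  shows "eventually (\<lambda>x. 3 * a' x = b' x \<and> 0 < 3 * b' x - a' x) (nhds x0)"
proof -
  have "0 < a' x0"
    using assms by auto
  then have "eventually (\<lambda>x. 3 * a' x = b' x) (nhds x0)"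
    using assms(1) by (intro ratio_defect_vanishes_near) auto
  moreover have "open {x. 0 < 3 * b' x - a' x}"
    by (intro open_Collect_less continuous_intros)
  then have "eventually (\<lambda>x. 0 < 3 * b' x - a' x) (nhds x0)"
    using \<open>0 < a' x0\<close> assms(1) eventually_nhds_in_open by fastforce
  ultimately show ?thesis
    by (rule eventually_conj)
qed

lemma ratio_defects_nonneg_or_one_neg:
  assumes no_rest: "\<And>x. a' x \<noteq> 0 \<or> b' x \<noteq> 0"
  shows "(\<forall>x. 0 \<le> 3 * a' x - b' x \<and> 0 \<le> 3 * b' x - a' x) \<or>
    (\<forall>x. 3 * a' x - b' x < 0 \<or> 3 * b' x - a' x < 0)"
proof -
  define S where "S = {x. 0 \<le> 3 * a' x - b' x \<and> 0 \<le> 3 * b' x - a' x}"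
  have "S = {} \<or> S = UNIV"
  proof (rule open_closed_real_cases)
    show "closed S"
      unfolding S_def Collect_conj_eq by (intro closed_Int closed_Collect_le continuous_intros)
    fix x assume "x \<in> S"
    then consider "3 * a' x = b' x" | "3 * b' x = a' x" | "0 < 3 * a' x - b' x" "0 < 3 * b' x - a' x"
      unfolding S_def by fastforce
    then show "eventually (\<lambda>y. y \<in> S) (nhds x)"
    proof cases
      case 1
      with \<open>x \<in> S\<close> have "eventually (\<lambda>y. 3 * a' y = b' y \<and> 0 < 3 * b' y - a' y) (nhds x)"
        using no_rest[of x] by (intro ratio_defect_zero_stable) (auto simp: S_def)
      then show ?thesis
        by eventually_elim (simp add: S_def)
    next
      case 2
      with \<open>x \<in> S\<close> have "eventually (\<lambda>y. 3 * b' y = a' y \<and> 0 < 3 * a' y - b' y) (nhds x)"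
        using no_rest[of x] by (intro wave_from_minus_one.ratio_defect_zero_stable[OF swap])
          (auto simp: S_def)
      then show ?thesis
        by eventually_elim (simp add: S_def)
    next
      case 3
      have "open {y. 0 < 3 * a' y - b' y \<and> 0 < 3 * b' y - a' y}"
        unfolding Collect_conj_eq by (intro open_Int open_Collect_less continuous_intros)
      with 3 have "eventually (\<lambda>y. 0 < 3 * a' y - b' y \<and> 0 < 3 * b' y - a' y) (nhds x)"
        using eventually_nhds_in_open by fastforce
      then show ?thesis
        by eventually_elim (simp add: S_def)
    qed
  qed
  then show ?thesis
    unfolding S_def by (auto simp: set_eq_iff not_le)
qed

lemma ratio_defect_zero_or_pos:
  assumes no_rest: "\<And>x. a' x \<noteq> 0 \<or> b' x \<noteq> 0"
    and nonneg: "\<And>x. 0 \<le> 3 * a' x - b' x" "\<And>x. 0 \<le> 3 * b' x - a' x"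
  shows "(\<forall>x. 3 * a' x = b' x) \<or> (\<forall>x. 0 < 3 * a' x - b' x)"
proof -
  define Z where "Z = {x. 3 * a' x = b' x}"
  have "Z = {} \<or> Z = UNIV"
  proof (rule open_closed_real_cases)
    show "closed Z"
      unfolding Z_def by (intro closed_Collect_eq continuous_intros)
    fix x assume "x \<in> Z"
    then have "eventually (\<lambda>y. 3 * a' y = b' y \<and> 0 < 3 * b' y - a' y) (nhds x)"
      using no_rest[of x] nonneg(2)[of x] by (intro ratio_defect_zero_stable) (auto simp: Z_def)
    then show "eventually (\<lambda>y. y \<in> Z) (nhds x)"
      by eventually_elim (simp add: Z_def)
  qed
  then show ?thesis
    using nonneg(1) unfolding Z_def by (force simp: set_eq_iff order.order_iff_strict)
qed

lemma bounded_combinations: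
  obtains M where "\<And>x. \<bar>3 * a x - b x\<bar> \<le> M" "\<And>x. \<bar>b x - a x\<bar> \<le> M"
proof -
  obtain M where M: "\<And>x. \<bar>a x\<bar> \<le> M" "\<And>x. \<bar>b x\<bar> \<le> M"
    using bounded_profile by blast
  then have "\<bar>3 * a x - b x\<bar> \<le> 4 * M" "\<bar>b x - a x\<bar> \<le> 4 * M" for x
    using M[of x] by linarith+
  then show thesis
    by (rule that)
qed

lemma ratio_defect_deriv_nonneg:
  assumes "v \<le> 0" "a y < b y" "0 < 3 * a' y - b' y" "0 < 3 * b' y - a' y"
  shows "0 \<le> (b y - a y - v) * (3 * a' y - b' y) +
    (if b' y \<le> a' y then 2 * (b y - a y) * (b' y - a' y) else 0)"
proof (cases "b' y \<le> a' y")
  case True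
  have "(b y - a y - v) * (3 * a' y - b' y) + 2 * (b y - a y) * (b' y - a' y)
      = (b y - a y) * (a' y + b' y) + (- v) * (3 * a' y - b' y)"
    by (simp add: algebra_simps)
  moreover have "0 < (b y - a y) * (a' y + b' y)"
    using assms(2-4) by simp
  moreover have "0 \<le> (- v) * (3 * a' y - b' y)"
    using assms(1,3) by (intro mult_nonneg_nonneg) auto
  ultimately show ?thesis
    using True by simp
next
  case False
  have "0 \<le> (b y - a y - v) * (3 * a' y - b' y)"
    using assms(1-3) by (intro mult_nonneg_nonneg) auto
  with False show ?thesis
    by simp
qed

lemma not_ratio_defects_pos_if_A_lt_B:
  assumes "v \<le> 0" "A < B"
    and pos: "\<And>x. 0 < 3 * a' x - b' x" "\<And>x. 0 < 3 * b' x - a' x"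
  shows False
proof -
  have "eventually (\<lambda>x. 0 < b x - a x) at_top"
    using order_tendstoD(1)[OF tendsto_diff[OF b_at_top a_at_top], of 0] \<open>A < B\<close> by simp
  then obtain X where gap: "\<And>x. X \<le> x \<Longrightarrow> a x < b x"
    by (auto simp: eventually_at_top_linorder)
  have rising: "3 * a' X - b' X \<le> 3 * a' x - b' x" if "X \<le> x" for x
    using ratio_defect_deriv_nonneg[OF \<open>v \<le> 0\<close> gap pos] that
    by (intro deriv_nonneg_imp_mono[OF ratio_defect_deriv]) auto
  obtain M where M: "\<And>x. \<bar>3 * a x - b x\<bar> \<le> M"
    using bounded_combinations by blast
  have deriv: "((\<lambda>x. 3 * a x - b x) has_real_derivative 3 * a' x - b' x) (at x)" for x
    by (auto intro!: derivative_eq_intros a_deriv b_deriv)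
  obtain z where "X < z" "\<bar>3 * a' z - b' z\<bar> < 3 * a' X - b' X"
    using small_deriv_if_bounded[where x=X, OF deriv M pos(1)[of X]] by blast
  with rising[of z] show False
    by linarith
qed

lemma not_all_ratio_defects_pos:
  assumes "v \<le> 0" and pos: "\<And>x. 0 < 3 * a' x - b' x" "\<And>x. 0 < 3 * b' x - a' x"
  shows False
proof -
  have sum_pos: "0 < a' x + b' x" for x
    using pos(1)[of x] pos(2)[of x] by linarith
  have sum_deriv: "((\<lambda>x. a x + b x) has_real_derivative a' x + b' x) (at x)" for x
    by (intro derivative_intros a_deriv b_deriv)
  have "-1 + -1 < a 0 + b 0"
    using sum_deriv sum_pos
    by (intro DERIV_pos_imp_increasing_at_bot[OF _ tendsto_add[OF a_at_bot b_at_bot]]) blast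
  moreover have "- (A + B) < - (a 0 + b 0)"
  proof (rule DERIV_neg_imp_decreasing_at_top[OF _ tendsto_minus[OF tendsto_add[OF a_at_top b_at_top]]])
    fix x
    show "\<exists>y. ((\<lambda>x. - (a x + b x)) has_real_derivative y) (at x) \<and> y < 0"
      using DERIV_minus[OF sum_deriv[of x]] sum_pos[of x] by auto
  qed
  ultimately have "0 < A + B + 2"
    by simp
  consider "A < B" | "B < A" | "A = B"
    by linarith
  then show False
  proof cases
    case 1
    then show False
      using not_ratio_defects_pos_if_A_lt_B \<open>v \<le> 0\<close> pos by blast
  next
    case 2
    then show False
      using wave_from_minus_one.not_ratio_defects_pos_if_A_lt_B[OF swap \<open>v \<le> 0\<close>] pos by blast
  next
    case 3
    with first_integral_at_top \<open>0 < A + B + 2\<close> have "v = 0"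
      by simp
    moreover have "0 \<le> (b 0 - a 0)\<^sup>2"
      by simp
    ultimately show False
      using first_integral[of 0] sum_pos[of 0] by simp
  qed
qed

lemma exists_rising_gap:
  assumes "a x1 < b x1"
  obtains x where "a x < b x" "a' x < b' x"
proof -
  define u where "u x = b x - a x" for x
  have u_deriv: "(u has_real_derivative b' x - a' x) (at x)" for x
    unfolding u_def by (intro derivative_intros a_deriv b_deriv)
  have "(u \<longlongrightarrow> 0) at_bot"
    unfolding u_def using tendsto_diff[OF b_at_bot a_at_bot] by simp
  moreover have "0 < u x1 / 2"
    using assms by (simp add: u_def)
  ultimately have "eventually (\<lambda>x. u x < u x1 / 2) at_bot"
    by (rule order_tendstoD(2))
  then obtain X where X: "\<And>x. x \<le> X \<Longrightarrow> u x < u x1 / 2"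
    by (auto simp: eventually_at_bot_linorder)
  define x0 where "x0 = min X x1 - 1"
  have "x0 < x1" "u x0 < u x1 / 2"
    using X[of x0] by (auto simp: x0_def)
  \<comment> \<open>the last point \<open>m < x1\<close> with \<open>u m = u x1 / 2\<close> is minus the first zero of \<open>h\<close> after \<open>- x1\<close>\<close>
  define h where "h s = u (- s) - u x1 / 2" for s
  have "(h has_real_derivative - (b' (- s) - a' (- s))) (at s)" for s
    unfolding h_def using u_deriv DERIV_mirror by (auto intro!: derivative_eq_intros)
  then have "continuous_on {- x1..- x0} h"
    by (intro continuous_at_imp_continuous_on ballI DERIV_isCont) blast
  moreover have "0 < h (- x1)" "h (- x0) \<le> 0"
    using assms \<open>u x0 < u x1 / 2\<close> by (auto simp: h_def u_def)
  ultimately obtain t where t: "- x1 < t" "h t = 0" "\<And>s. - x1 \<le> s \<Longrightarrow> s < t \<Longrightarrow> 0 < h s"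
    using first_zero_after_pos[of "- x1" "- x0" h] \<open>x0 < x1\<close> by auto
  define m where "m = - t"
  have "m < x1" "u m = u x1 / 2" and above: "\<And>s. m < s \<Longrightarrow> s \<le> x1 \<Longrightarrow> u x1 / 2 < u s"
    using t t(3)[of "- s" for s] by (auto simp: m_def h_def)
  obtain z where z: "m < z" "z < x1" "u x1 - u m = (x1 - m) * (b' z - a' z)"
    using MVT2[OF \<open>m < x1\<close>, of u "\<lambda>x. b' x - a' x"] u_deriv by blast
  have "0 < (x1 - m) * (b' z - a' z)"
    using z(3) \<open>u m = u x1 / 2\<close> assms by (simp add: u_def)
  with \<open>m < x1\<close> have "a' z < b' z"
    by (simp add: zero_less_mult_iff)
  moreover have "a z < b z"
    using above[of z] z assms by (simp add: u_def)
  ultimately show thesis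
    using that by blast
qed

text \<open>For \<open>v \<le> 0\<close> the region \<open>3 a' < b'\<close>, \<open>a' < b'\<close>, \<open>a < b\<close> is forward invariant: a first exit
  could only happen through \<open>a' = b'\<close>, where \<open>(b' - a')' = (a - b) a' > 0\<close>.\<close>

lemma gap_region_monotone:
  assumes "v \<le> 0" "x0 \<le> t"
    and inside: "\<And>s. x0 < s \<Longrightarrow> s < t \<Longrightarrow> 3 * a' s < b' s \<and> a' s < b' s \<and> a s < b s"
  shows "3 * a' t - b' t \<le> 3 * a' x0 - b' x0" and "b x0 - a x0 \<le> b t - a t"
proof -
  show "3 * a' t - b' t \<le> 3 * a' x0 - b' x0"
  proof (rule DERIV_nonpos_imp_decreasing_open[OF \<open>x0 \<le> t\<close>])
    fix s assume "x0 < s" "s < t"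
    with inside have s: "3 * a' s < b' s" "a' s < b' s" "a s < b s"
      by auto
    with \<open>v \<le> 0\<close> have "0 \<le> b s - a s - v"
      by simp
    with s show "\<exists>y. ((\<lambda>x. 3 * a' x - b' x) has_real_derivative y) (at s) \<and> y \<le> 0"
      using ratio_defect_deriv[of s] by (auto simp: mult_nonneg_nonpos)
  qed (intro continuous_intros)
  show "b x0 - a x0 \<le> b t - a t"
  proof (rule DERIV_nonneg_imp_increasing_open[OF \<open>x0 \<le> t\<close>])
    fix s assume "x0 < s" "s < t"
    with inside have "a' s < b' s"
      by auto
    then show "\<exists>y. ((\<lambda>x. b x - a x) has_real_derivative y) (at s) \<and> 0 \<le> y"
      by (auto intro!: derivative_eq_intros a_deriv b_deriv)
  qed (intro continuous_intros)
qed

lemma gap_slope_deriv_at_tie: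
  assumes "a' t = b' t"
  shows "((\<lambda>x. b' x - a' x) has_real_derivative (a t - b t) * a' t) (at t)"
proof -
  have "((\<lambda>x. b' x - a' x) has_real_derivative b'' t - a'' t) (at t)"
    by (intro derivative_intros a'_deriv b'_deriv)
  moreover have "b'' t - a'' t = (a t - b t) * a' t"
    unfolding a''_eq b''_eq assms by (rule tw_accel_tie)
  ultimately show ?thesis
    by simp
qed

lemma gap_region_invariant:
  assumes "v \<le> 0" and start: "3 * a' x0 < b' x0" "a' x0 < b' x0" "a x0 < b x0" and "x0 \<le> s"
  shows "3 * a' s < b' s \<and> a' s < b' s \<and> a s < b s"
proof (rule ccontr)
  assume exit: "\<not> ?thesis"
  define g where "g r = min (b' r - 3 * a' r) (min (b' r - a' r) (b r - a r))" for r
  have "continuous_on {x0..s} g"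
    unfolding g_def by (intro continuous_intros)
  moreover have "0 < g x0" "g s \<le> 0"
    using start exit by (auto simp: g_def)
  ultimately obtain t where t: "x0 < t" "g t = 0" "\<And>r. x0 \<le> r \<Longrightarrow> r < t \<Longrightarrow> 0 < g r"
    using first_zero_after_pos[of x0 s g] \<open>x0 \<le> s\<close> by blast
  have before: "3 * a' r < b' r \<and> a' r < b' r \<and> a r < b r" if "x0 \<le> r" "r < t" for r
    using t(3)[OF that] by (simp add: g_def)
  have "3 * a' t - b' t \<le> 3 * a' x0 - b' x0" "b x0 - a x0 \<le> b t - a t"
    by (rule gap_region_monotone[OF \<open>v \<le> 0\<close>]; use \<open>x0 < t\<close> before in auto)+
  with start have "3 * a' t < b' t" "a t < b t"
    by auto
  with \<open>g t = 0\<close> have tie: "a' t = b' t"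
    by (auto simp: g_def min_def split: if_splits)
  with \<open>3 * a' t < b' t\<close> \<open>a t < b t\<close> have "0 < (a t - b t) * a' t"
    by (simp add: mult_neg_neg)
  then obtain d where "0 < d" and left: "\<And>h. 0 < h \<Longrightarrow> h < d \<Longrightarrow> b' (t - h) - a' (t - h) < 0"
    using DERIV_pos_inc_left[OF gap_slope_deriv_at_tie[OF tie]] tie by force
  obtain h where "0 < h" "h < d" "h < t - x0"
    using field_lbound_gt_zero[of d "t - x0"] \<open>0 < d\<close> \<open>x0 < t\<close> by auto
  with left[of h] before[of "t - h"] show False
    by simp
qed

lemma not_ratio_defect_neg_if_gap:
  assumes "v \<le> 0" and neg: "\<And>x. 3 * a' x - b' x < 0 \<or> 3 * b' x - a' x < 0" and "a x1 < b x1"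
  shows False
proof -
  obtain x0 where x0: "a x0 < b x0" "a' x0 < b' x0"
    using exists_rising_gap[OF \<open>a x1 < b x1\<close>] by blast
  then have start: "3 * a' x0 < b' x0"
    using neg[of x0] by linarith
  obtain M where M: "\<And>x. \<bar>3 * a x - b x\<bar> \<le> M"
    using bounded_combinations by blast
  have deriv: "((\<lambda>x. 3 * a x - b x) has_real_derivative 3 * a' x - b' x) (at x)" for x
    by (auto intro!: derivative_eq_intros a_deriv b_deriv)
  obtain z where "x0 < z" "\<bar>3 * a' z - b' z\<bar> < - (3 * a' x0 - b' x0)"
    using small_deriv_if_bounded[where x=x0 and c="- (3 * a' x0 - b' x0)", OF deriv M] start
    by auto
  moreover have "3 * a' z - b' z \<le> 3 * a' x0 - b' x0"
    using gap_region_invariant[OF \<open>v \<le> 0\<close> start x0(2) x0(1)] \<open>x0 < z\<close>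
    by (intro gap_region_monotone[OF \<open>v \<le> 0\<close>]) auto
  ultimately show False
    by linarith
qed

lemma not_all_ratio_defect_neg:
  assumes "v \<le> 0" and neg: "\<And>x. 3 * a' x - b' x < 0 \<or> 3 * b' x - a' x < 0"
  shows False
proof -
  have "\<not> a x < b x" "\<not> b x < a x" for x
    using not_ratio_defect_neg_if_gap[OF assms]
      wave_from_minus_one.not_ratio_defect_neg_if_gap[OF swap \<open>v \<le> 0\<close>] neg by blast+
  then have eq: "b x = a x" for x
    by (meson linorder_neqE)
  have eq': "b' x = a' x" for x
    using b_deriv[of x] a_deriv[of x] by (simp add: eq[abs_def] DERIV_unique)
  have slope_neg: "a' x < 0" for x
    using neg[of x] eq'[of x] by auto
  have slope: "a' x = - v * (a x + 1)" for x
    using first_integral[of x] eq' eq by (simp add: algebra_simps)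
  have "v < 0"
    using slope[of 0] slope_neg[of 0] \<open>v \<le> 0\<close> by (cases "v = 0") auto
  have below: "a 0 + 1 < 0"
    using slope[of 0] slope_neg[of 0] \<open>v < 0\<close> by (simp add: zero_less_mult_iff)
  have "A < a 0"
    using a_deriv slope_neg by (intro DERIV_neg_imp_decreasing_at_top[OF _ a_at_top]) blast
  have "b = a"
    using eq by (rule ext)
  with b_at_top have "(a \<longlongrightarrow> B) at_top"
    by simp
  with a_at_top have "A = B"
    using tendsto_unique trivial_limit_at_top_linorder by blast
  with first_integral_at_top \<open>v < 0\<close> have "A = -1"
    by simp
  with \<open>A < a 0\<close> below show False
    by simp
qed

lemma ratio_defect_vanishes:
  assumes "v \<le> 0"
  shows "(\<forall>x. 3 * a' x = b' x) \<or> (\<forall>x. 3 * b' x = a' x)"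
proof (cases "\<exists>x0. a' x0 = 0 \<and> b' x0 = 0")
  case True
  then obtain x0 where "a' x0 = 0" "b' x0 = 0"
    by blast
  then have "a' x = 0 \<and> b' x = 0" for x
    by (rule deriv_vanishing)
  then show ?thesis
    by simp
next
  case False
  then have no_rest: "a' x \<noteq> 0 \<or> b' x \<noteq> 0" for x
    by blast
  from ratio_defects_nonneg_or_one_neg[OF no_rest] show ?thesis
  proof
    assume "\<forall>x. 0 \<le> 3 * a' x - b' x \<and> 0 \<le> 3 * b' x - a' x"
    then have nonneg: "0 \<le> 3 * a' x - b' x" "0 \<le> 3 * b' x - a' x" for x
      by auto
    have "(\<forall>x. 3 * a' x = b' x) \<or> (\<forall>x. 0 < 3 * a' x - b' x)"
      using ratio_defect_zero_or_pos[OF no_rest nonneg] .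
    moreover have "(\<forall>x. 3 * b' x = a' x) \<or> (\<forall>x. 0 < 3 * b' x - a' x)"
      using wave_from_minus_one.ratio_defect_zero_or_pos[OF swap] no_rest nonneg by blast
    ultimately show ?thesis
      using not_all_ratio_defects_pos[OF \<open>v \<le> 0\<close>] by blast
  next
    assume "\<forall>x. 3 * a' x - b' x < 0 \<or> 3 * b' x - a' x < 0"
    then show ?thesis
      using not_all_ratio_defect_neg[OF \<open>v \<le> 0\<close>] by blast
  qed
qed

lemma profile_if_ratio_defect_zero:
  assumes "v \<le> 0" and ratio: "\<And>x. 3 * a' x = b' x"
  shows "(\<forall>x. a x = -1 \<and> b x = -1) \<or> (\<exists>s. \<forall>x. (a x, b x) = minus_one_wave v (x + s))"
proof -
  have "((\<lambda>x. b x - 3 * a x) has_real_derivative 0) (at x)" for x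
    using ratio[of x] by (auto intro!: derivative_eq_intros a_deriv b_deriv)
  then have const: "b x - 3 * a x = b 0 - 3 * a 0" for x
    using DERIV_isconst_all by blast
  have "((\<lambda>x. b x - 3 * a x) \<longlongrightarrow> -1 - 3 * -1) at_bot"
    by (intro tendsto_intros a_at_bot b_at_bot)
  moreover have "(\<lambda>x. b x - 3 * a x) = (\<lambda>_. b 0 - 3 * a 0)"
    using const by (rule ext)
  ultimately have "b 0 - 3 * a 0 = 2"
    by (simp add: tendsto_const_iff)
  with const have b_eq: "b x = 3 * a x + 2" for x
    by (metis add.commute diff_eq_eq)
  define \<alpha> where "\<alpha> x = a x + 1" for x
  have logistic: "a' x = - v * \<alpha> x - (\<alpha> x)\<^sup>2 / 2" for x
  proof -
    have "4 * a' x = 4 * (- v * \<alpha> x - (\<alpha> x)\<^sup>2 / 2)"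
      using first_integral[of x] unfolding ratio[symmetric] b_eq
      by (simp add: \<alpha>_def power2_eq_square algebra_simps)
    then show ?thesis
      by simp
  qed
  have "(\<alpha> has_real_derivative a' x) (at x)" for x
    unfolding \<alpha>_def by (auto intro!: derivative_eq_intros a_deriv)
  then have "(\<alpha> has_real_derivative - v * \<alpha> x - (\<alpha> x)\<^sup>2 / 2) (at x)" for x
    by (simp only: logistic)
  moreover have "(\<alpha> \<longlongrightarrow> 0) at_bot" "(\<alpha> \<longlongrightarrow> A + 1) at_top"
    unfolding \<alpha>_def[abs_def] using tendsto_add[OF a_at_bot tendsto_const, of 1]
    by (auto intro!: tendsto_intros a_at_top)
  ultimately have "(\<forall>x. \<alpha> x = 0) \<or> (\<exists>s. \<forall>x. \<alpha> x = - 2 * v / (1 + exp (v * (x + s))))"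
    using logistic_profile_cases[OF \<open>v \<le> 0\<close>] by blast
  moreover have "a x = \<alpha> x - 1" "b x = 3 * \<alpha> x - 1" for x
    by (simp_all add: \<alpha>_def b_eq)
  ultimately show ?thesis
    by (auto simp: minus_one_wave_def)
qed

lemma energy_decay_at_bot:
  assumes "0 < v"
  shows "eventually (\<lambda>x. 2 * a' x * a'' x + 2 * b' x * b'' x \<le> - v * ((a' x)\<^sup>2 + (b' x)\<^sup>2)) at_bot"
proof -
  have "((\<lambda>x. b x - a x) \<longlongrightarrow> 0) at_bot"
    using tendsto_diff[OF b_at_bot a_at_bot] by simp
  from tendstoD[OF this, of "v / 4"] \<open>0 < v\<close>
  have "eventually (\<lambda>x. \<bar>b x - a x\<bar> < v / 4) at_bot"
    by (simp add: dist_real_def)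
  then show ?thesis
  proof eventually_elim
    case (elim x)
    have "4 * \<bar>b x - a x\<bar> * ((a' x)\<^sup>2 + (b' x)\<^sup>2) \<le> v * ((a' x)\<^sup>2 + (b' x)\<^sup>2)"
      using elim by (intro mult_right_mono) auto
    with energy_deriv_bound[of x]
      abs_ge_self[of "2 * a' x * a'' x + 2 * b' x * b'' x + 2 * v * ((a' x)\<^sup>2 + (b' x)\<^sup>2)"]
    show ?case
      by linarith
  qed
qed

lemma energy_large_at_bot:
  assumes "0 < v" and no_rest: "\<And>x. a' x \<noteq> 0 \<or> b' x \<noteq> 0"
  shows "eventually (\<lambda>x. 1 \<le> (a' x)\<^sup>2 + (b' x)\<^sup>2) at_bot"
proof -
  define N where "N x = (a' x)\<^sup>2 + (b' x)\<^sup>2" for x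
  define N' where "N' x = 2 * a' x * a'' x + 2 * b' x * b'' x" for x
  have N_deriv: "(N has_real_derivative N' x) (at x)" for x
    unfolding N_def N'_def by (auto intro!: derivative_eq_intros a'_deriv b'_deriv)
  obtain X where decay: "\<And>x. x \<le> X \<Longrightarrow> N' x \<le> - v * N x"
    using energy_decay_at_bot[OF \<open>0 < v\<close>] unfolding N_def N'_def eventually_at_bot_linorder
    by blast
  have "0 < N X"
    using no_rest[of X] by (simp add: N_def sum_power2_gt_zero_iff)
  have growth: "N X + v * N X * (X - y) \<le> N y" if "y \<le> X" for y
    by (rule backward_growth_if_deriv_le[where N=N and N'=N'])
      (use \<open>0 < v\<close> that N_deriv decay in \<open>auto simp: N_def\<close>)
  have "1 \<le> N y" if "y \<le> X - 1 / (v * N X)" for y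
  proof -
    have "1 \<le> v * N X * (X - y)"
      using that \<open>0 < v\<close> \<open>0 < N X\<close> by (simp add: field_simps)
    moreover have "X - 1 / (v * N X) \<le> X"
      using \<open>0 < v\<close> \<open>0 < N X\<close> by simp
    ultimately show ?thesis
      using growth[of y] that \<open>0 < N X\<close> by linarith
  qed
  then show ?thesis
    unfolding eventually_at_bot_linorder N_def by blast
qed

lemma gap_slope_large_at_bot:
  assumes "0 < v" and no_rest: "\<And>x. a' x \<noteq> 0 \<or> b' x \<noteq> 0"
  shows "eventually (\<lambda>x. 1 \<le> \<bar>b' x - a' x\<bar>) at_bot"
proof -
  have "((\<lambda>x. a' x + b' x) \<longlongrightarrow> - v * (-1 + -1 + 2) - (-1 - -1)\<^sup>2 / 2) at_bot"
    unfolding first_integral by (intro tendsto_intros a_at_bot b_at_bot) auto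
  from tendstoD[OF this, of 1]
  have "eventually (\<lambda>x. \<bar>a' x + b' x\<bar> < 1) at_bot"
    by (simp add: dist_real_def)
  with energy_large_at_bot[OF \<open>0 < v\<close> no_rest] show ?thesis
  proof eventually_elim
    case (elim x)
    have "(a' x + b' x)\<^sup>2 \<le> 1"
      using elim(2) by (simp add: abs_square_le_1 less_imp_le)
    have "1 \<le> 2 * p - q" if "1 \<le> p" "q \<le> 1" for p q :: real
      using that by linarith
    from this[OF elim(1) \<open>(a' x + b' x)\<^sup>2 \<le> 1\<close>]
    have "1 \<le> 2 * ((a' x)\<^sup>2 + (b' x)\<^sup>2) - (a' x + b' x)\<^sup>2" .
    also have "\<dots> = (b' x - a' x)\<^sup>2"
      by (simp add: power2_eq_square algebra_simps)
    finally have "1 \<le> (b' x - a' x)\<^sup>2" .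
    then show ?case
      by (metis abs_square_less_1 not_less)
  qed
qed

lemma constant_if_pos_speed:
  assumes "0 < v"
  shows "a x = -1 \<and> b x = -1"
proof (cases "\<exists>x0. a' x0 = 0 \<and> b' x0 = 0")
  case True
  then show ?thesis
    using constant_if_rest_point by blast
next
  case False
  then have "a' x \<noteq> 0 \<or> b' x \<noteq> 0" for x
    by blast
  from gap_slope_large_at_bot[OF \<open>0 < v\<close> this]
  obtain Y where Y: "\<And>x. x \<le> Y \<Longrightarrow> 1 \<le> \<bar>b' x - a' x\<bar>"
    unfolding eventually_at_bot_linorder by blast
  obtain M where M: "\<And>x. \<bar>b x - a x\<bar> \<le> M"
    using bounded_combinations by blast
  have deriv: "((\<lambda>x. b x - a x) has_real_derivative b' x - a' x) (at x)" for x
    by (intro derivative_intros a_deriv b_deriv)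
  obtain z where "z < Y" "\<bar>b' z - a' z\<bar> < 1"
    using small_deriv_if_bounded[where x="Y - (2 * M + 1)" and c=1, OF deriv M] by auto
  with Y[of z] show ?thesis
    by simp
qed

end

lemma logistic_sigmoid_deriv:
  "((\<lambda>x. 1 / (1 + exp (v * x))) has_real_derivative
    - v * (1 / (1 + exp (v * x)) - (1 / (1 + exp (v * x)))\<^sup>2)) (at x)"
proof -
  have pos: "0 < 1 + exp (v * x)"
    by (simp add: add_pos_pos)
  then have "((\<lambda>x. 1 / (1 + exp (v * x))) has_real_derivative
      - (exp (v * x) * v) / (1 + exp (v * x))\<^sup>2) (at x)"
    by (auto intro!: derivative_eq_intros simp: power2_eq_square)
  moreover have "1 / (1 + exp (v * x)) - (1 / (1 + exp (v * x)))\<^sup>2 = exp (v * x) / (1 + exp (v * x))\<^sup>2"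
    using pos by (simp add: power2_eq_square divide_simps)
  ultimately show ?thesis
    by (simp add: mult.commute)
qed

lemma minus_one_wave_ode:
  "\<exists>a' a'' b' b''. wave_ode v (\<lambda>x. fst (minus_one_wave v x)) a' a'' (\<lambda>x. snd (minus_one_wave v x)) b' b''"
proof -
  define \<phi> where "\<phi> x = 1 / (1 + exp (v * x))" for x
  define \<psi> where "\<psi> x = \<phi> x - (\<phi> x)\<^sup>2" for x
  have pos: "0 < 1 + exp (v * x)" for x
    by (simp add: add_pos_pos)
  have d\<phi>: "(\<phi> has_real_derivative - v * \<psi> x) (at x)" for x
    unfolding \<phi>_def[abs_def] \<psi>_def by (rule logistic_sigmoid_deriv)
  have d\<psi>: "(\<psi> has_real_derivative - v * \<psi> x * (1 - 2 * \<phi> x)) (at x)" for x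
    unfolding \<psi>_def[abs_def] by (auto intro!: derivative_eq_intros d\<phi> simp: \<psi>_def power2_eq_square algebra_simps)
  have "0 < \<phi> x" "\<phi> x < 1" for x
    using pos[of x] by (simp_all add: \<phi>_def)
  then have "0 < \<psi> x" for x
    by (simp add: \<psi>_def power2_eq_square)
  have wave: "minus_one_wave v x = (-1 - 2 * v * \<phi> x, -1 - 6 * v * \<phi> x)" for x
    by (simp add: minus_one_wave_def \<phi>_def)
  have "wave_ode v (\<lambda>x. -1 - 2 * v * \<phi> x) (\<lambda>x. 2 * v\<^sup>2 * \<psi> x) (\<lambda>x. - 2 * v ^ 3 * \<psi> x * (1 - 2 * \<phi> x))
      (\<lambda>x. -1 - 6 * v * \<phi> x) (\<lambda>x. 6 * v\<^sup>2 * \<psi> x) (\<lambda>x. - 6 * v ^ 3 * \<psi> x * (1 - 2 * \<phi> x))"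
    unfolding wave_ode_def
  proof (intro allI conjI)
    fix x
    show "((\<lambda>x. -1 - 2 * v * \<phi> x) has_real_derivative 2 * v\<^sup>2 * \<psi> x) (at x)"
      "((\<lambda>x. -1 - 6 * v * \<phi> x) has_real_derivative 6 * v\<^sup>2 * \<psi> x) (at x)"
      "((\<lambda>x. 2 * v\<^sup>2 * \<psi> x) has_real_derivative - 2 * v ^ 3 * \<psi> x * (1 - 2 * \<phi> x)) (at x)"
      "((\<lambda>x. 6 * v\<^sup>2 * \<psi> x) has_real_derivative - 6 * v ^ 3 * \<psi> x * (1 - 2 * \<phi> x)) (at x)"
      by (auto intro!: derivative_eq_intros d\<phi> d\<psi> simp: power2_eq_square power3_eq_cube)
    have "2 * v\<^sup>2 * \<psi> x \<le> 6 * v\<^sup>2 * \<psi> x"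
      using \<open>0 < \<psi> x\<close> by simp
    then show "- 6 * v ^ 3 * \<psi> x * (1 - 2 * \<phi> x) =
        tw_accel v (-1 - 6 * v * \<phi> x) (6 * v\<^sup>2 * \<psi> x) (-1 - 2 * v * \<phi> x) (2 * v\<^sup>2 * \<psi> x)"
      unfolding tw_accel_def by (simp add: power2_eq_square power3_eq_cube algebra_simps)
    show "- 2 * v ^ 3 * \<psi> x * (1 - 2 * \<phi> x) =
        tw_accel v (-1 - 2 * v * \<phi> x) (2 * v\<^sup>2 * \<psi> x) (-1 - 6 * v * \<phi> x) (6 * v\<^sup>2 * \<psi> x)"
    proof (cases "v = 0")
      case False
      then have "\<not> 6 * v\<^sup>2 * \<psi> x \<le> 2 * v\<^sup>2 * \<psi> x"
        using \<open>0 < \<psi> x\<close> by simp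
      then show ?thesis
        unfolding tw_accel_def by (simp add: power2_eq_square power3_eq_cube algebra_simps)
    qed (simp add: tw_accel_def)
  qed
  then show ?thesis
    unfolding wave by auto
qed

lemma minus_one_wave_limits:
  assumes "v < 0"
  shows "(minus_one_wave v \<longlongrightarrow> (-1, -1)) at_bot"
    and "(minus_one_wave v \<longlongrightarrow> (-2 * v - 1, -6 * v - 1)) at_top"
proof -
  have "((\<lambda>x. -1 - k * v / (1 + exp (v * x))) \<longlongrightarrow> -1) at_bot"
    and "((\<lambda>x. -1 - k * v / (1 + exp (v * x))) \<longlongrightarrow> - k * v - 1) at_top" for k
    using assms by real_asymp+
  then show "(minus_one_wave v \<longlongrightarrow> (-1, -1)) at_bot"
    "(minus_one_wave v \<longlongrightarrow> (-2 * v - 1, -6 * v - 1)) at_top"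
    unfolding minus_one_wave_def[abs_def] by (auto intro!: tendsto_Pair)
qed

lemma nonconstant_if_limits_differ:
  assumes "(g \<longlongrightarrow> L) at_bot" "(g \<longlongrightarrow> R) at_top" "L \<noteq> R"
  shows "nonconstant g"
proof (rule ccontr)
  assume "\<not> nonconstant g"
  then have "g = (\<lambda>_. g 0)"
    by (auto simp: nonconstant_def)
  with assms show False
    by (metis tendsto_const_iff trivial_limit_at_bot_linorder trivial_limit_at_top_linorder)
qed

lemma tendsto_prod_swap: "(g \<longlongrightarrow> L) F \<Longrightarrow> ((\<lambda>x. prod.swap (g x)) \<longlongrightarrow> prod.swap L) F"
  unfolding prod.swap_def by (intro tendsto_Pair tendsto_fst tendsto_snd)

lemma traveling_wave_swap:
  assumes "traveling_wave v g"
  shows "traveling_wave v (\<lambda>x. prod.swap (g x))"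
proof -
  obtain L R where "(g \<longlongrightarrow> L) at_bot" "(g \<longlongrightarrow> R) at_top"
    using assms unfolding traveling_wave_def by blast
  then have "((\<lambda>x. prod.swap (g x)) \<longlongrightarrow> prod.swap L) at_bot" "((\<lambda>x. prod.swap (g x)) \<longlongrightarrow> prod.swap R) at_top"
    by (simp_all add: tendsto_prod_swap)
  with wave_ode_swap[OF traveling_wave_imp_wave_ode[OF assms]] show ?thesis
    by (intro wave_ode_imp_traveling_wave) simp_all
qed

lemma tendsto_reflect_at_bot:
  fixes g :: "real \<Rightarrow> 'a::real_normed_vector"
  shows "(g \<longlongrightarrow> L) at_top \<Longrightarrow> ((\<lambda>x. - g (- x)) \<longlongrightarrow> - L) at_bot"
  by (simp add: filterlim_at_bot_mirror tendsto_minus)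

lemma tendsto_reflect_at_top:
  fixes g :: "real \<Rightarrow> 'a::real_normed_vector"
  shows "(g \<longlongrightarrow> L) at_bot \<Longrightarrow> ((\<lambda>x. - g (- x)) \<longlongrightarrow> - L) at_top"
  by (simp add: filterlim_at_top_mirror tendsto_minus)

lemma traveling_wave_reflect:
  assumes "traveling_wave v g"
  shows "traveling_wave (- v) (\<lambda>x. - g (- x))"
proof -
  obtain L R where "(g \<longlongrightarrow> L) at_bot" "(g \<longlongrightarrow> R) at_top"
    using assms unfolding traveling_wave_def by blast
  then have "((\<lambda>x. - g (- x)) \<longlongrightarrow> - R) at_bot" "((\<lambda>x. - g (- x)) \<longlongrightarrow> - L) at_top"
    by (simp_all add: tendsto_reflect_at_bot tendsto_reflect_at_top)
  with wave_ode_reflect[OF traveling_wave_imp_wave_ode[OF assms]] show ?thesis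
    by (intro wave_ode_imp_traveling_wave) simp_all
qed

lemma nonconstant_reflect: "nonconstant (\<lambda>x. - g (- x)) \<longleftrightarrow> nonconstant g"
  unfolding nonconstant_def by (metis minus_equation_iff neg_equal_iff_equal)

lemma profile_of_traveling_wave:
  assumes "traveling_wave v g" and "(g \<longlongrightarrow> (-1, -1)) at_bot"
  defines "a \<equiv> \<lambda>x. fst (g x)" and "b \<equiv> \<lambda>x. snd (g x)"
  shows "\<exists>A B. wave_from_minus_one v a (deriv a) (deriv (deriv a)) b (deriv b) (deriv (deriv b)) A B"
proof -
  obtain R where R: "(g \<longlongrightarrow> R) at_top"
    using assms(1) unfolding traveling_wave_def by blast
  have "wave_from_minus_one v a (deriv a) (deriv (deriv a)) b (deriv b) (deriv (deriv b)) (fst R) (snd R)"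
    using traveling_wave_imp_wave_ode[OF assms(1)] tendsto_fst[OF assms(2)] tendsto_snd[OF assms(2)]
      tendsto_fst[OF R] tendsto_snd[OF R]
    unfolding a_def b_def by unfold_locales simp_all
  then show ?thesis
    by blast
qed

lemma traveling_wave_leaving_minus_one_cases:
  assumes "v \<le> 0" "traveling_wave v g" "(g \<longlongrightarrow> (-1, -1)) at_bot"
  shows "(\<forall>x. g x = (-1, -1)) \<or>
    (\<exists>s. g = (\<lambda>x. minus_one_wave v (x + s)) \<or> g = (\<lambda>x. prod.swap (minus_one_wave v (x + s))))"
proof -
  define a where "a x = fst (g x)" for x
  define b where "b x = snd (g x)" for x
  obtain A B where "wave_from_minus_one v a (deriv a) (deriv (deriv a)) b (deriv b) (deriv (deriv b)) A B"
    using profile_of_traveling_wave[OF assms(2,3)] unfolding a_def[abs_def] b_def[abs_def] by blast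
  then interpret W: wave_from_minus_one v a "deriv a" "deriv (deriv a)" b "deriv b" "deriv (deriv b)" A B .
  interpret S: wave_from_minus_one v b "deriv b" "deriv (deriv b)" a "deriv a" "deriv (deriv a)" B A
    by (rule W.swap)
  have g: "g x = (a x, b x)" for x
    by (simp add: a_def b_def)
  from W.ratio_defect_vanishes[OF \<open>v \<le> 0\<close>] show ?thesis
  proof
    assume "\<forall>x. 3 * deriv a x = deriv b x"
    then have "(\<forall>x. a x = -1 \<and> b x = -1) \<or> (\<exists>s. \<forall>x. (a x, b x) = minus_one_wave v (x + s))"
      using W.profile_if_ratio_defect_zero[OF \<open>v \<le> 0\<close>] by blast
    then show ?thesis
      unfolding g fun_eq_iff by auto
  next
    assume "\<forall>x. 3 * deriv b x = deriv a x"
    then have "(\<forall>x. b x = -1 \<and> a x = -1) \<or> (\<exists>s. \<forall>x. (b x, a x) = minus_one_wave v (x + s))"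
      using S.profile_if_ratio_defect_zero[OF \<open>v \<le> 0\<close>] by blast
    then show ?thesis
      unfolding g fun_eq_iff by (auto simp: prod.swap_def prod_eq_iff)
  qed
qed

lemma constant_if_leaving_minus_one_pos_speed:
  assumes "0 < v" "traveling_wave v g" "(g \<longlongrightarrow> (-1, -1)) at_bot"
  shows "g x = (-1, -1)"
proof -
  obtain A B where "wave_from_minus_one v (\<lambda>x. fst (g x)) (deriv (\<lambda>x. fst (g x)))
      (deriv (deriv (\<lambda>x. fst (g x)))) (\<lambda>x. snd (g x)) (deriv (\<lambda>x. snd (g x)))
      (deriv (deriv (\<lambda>x. snd (g x)))) A B"
    using profile_of_traveling_wave[OF assms(2,3)] by blast
  from wave_from_minus_one.constant_if_pos_speed[OF this \<open>0 < v\<close>] show ?thesis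
    by (simp add: prod_eq_iff)
qed

lemma waves_leaving_minus_one:
  assumes "v < 0"
  shows "\<exists>G H. traveling_wave v G \<and> nonconstant G \<and>
      (G \<longlongrightarrow> (-1, -1)) at_bot \<and> (G \<longlongrightarrow> (-2 * v - 1, -6 * v - 1)) at_top \<and>
      traveling_wave v H \<and> nonconstant H \<and>
      (H \<longlongrightarrow> (-1, -1)) at_bot \<and> (H \<longlongrightarrow> (-6 * v - 1, -2 * v - 1)) at_top \<and>
      (\<forall>K. traveling_wave v K \<and> nonconstant K \<and> (K \<longlongrightarrow> (-1, -1)) at_bot \<longrightarrow>
        (\<exists>s. K = (\<lambda>x. G (x + s)) \<or> K = (\<lambda>x. H (x + s))))"
proof (rule exI[of _ "minus_one_wave v"], rule exI[of _ "\<lambda>x. prod.swap (minus_one_wave v x)"],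
    intro conjI allI impI)
  obtain a' a'' b' b'' where
    "wave_ode v (\<lambda>x. fst (minus_one_wave v x)) a' a'' (\<lambda>x. snd (minus_one_wave v x)) b' b''"
    using minus_one_wave_ode by blast
  from wave_ode_imp_traveling_wave[OF this minus_one_wave_limits[OF assms]]
  show G: "traveling_wave v (minus_one_wave v)" .
  then show "traveling_wave v (\<lambda>x. prod.swap (minus_one_wave v x))"
    by (rule traveling_wave_swap)
  show G_lim: "(minus_one_wave v \<longlongrightarrow> (-1, -1)) at_bot"
    "(minus_one_wave v \<longlongrightarrow> (-2 * v - 1, -6 * v - 1)) at_top"
    by (rule minus_one_wave_limits[OF assms])+
  show H_lim: "((\<lambda>x. prod.swap (minus_one_wave v x)) \<longlongrightarrow> (-1, -1)) at_bot"
    "((\<lambda>x. prod.swap (minus_one_wave v x)) \<longlongrightarrow> (-6 * v - 1, -2 * v - 1)) at_top"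
    using G_lim[THEN tendsto_prod_swap] by simp_all
  show "nonconstant (minus_one_wave v)"
    by (rule nonconstant_if_limits_differ[OF G_lim]) (use assms in simp)
  show "nonconstant (\<lambda>x. prod.swap (minus_one_wave v x))"
    by (rule nonconstant_if_limits_differ[OF H_lim]) (use assms in simp)
  fix K assume K: "traveling_wave v K \<and> nonconstant K \<and> (K \<longlongrightarrow> (-1, -1)) at_bot"
  then have "\<not> (\<forall>x. K x = (-1, -1))"
    unfolding nonconstant_def by metis
  moreover have "(\<forall>x. K x = (-1, -1)) \<or>
      (\<exists>s. K = (\<lambda>x. minus_one_wave v (x + s)) \<or> K = (\<lambda>x. prod.swap (minus_one_wave v (x + s))))"
    using K assms by (intro traveling_wave_leaving_minus_one_cases) auto
  ultimately show "\<exists>s. K = (\<lambda>x. minus_one_wave v (x + s)) \<or>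
      K = (\<lambda>x. prod.swap (minus_one_wave v (x + s)))"
    by blast
qed

lemma stationary_leaving_minus_one:
  assumes "traveling_wave 0 g" "(g \<longlongrightarrow> (-1, -1)) at_bot"
  shows "g y = (-1, -1)"
  using traveling_wave_leaving_minus_one_cases[OF _ assms] by (auto simp: minus_one_wave_def)

lemma waves_reaching_one:
  assumes "0 < v"
  shows "\<exists>G H. traveling_wave v G \<and> nonconstant G \<and>
      (G \<longlongrightarrow> (1 - 2 * v, 1 - 6 * v)) at_bot \<and> (G \<longlongrightarrow> (1, 1)) at_top \<and>
      traveling_wave v H \<and> nonconstant H \<and>
      (H \<longlongrightarrow> (1 - 6 * v, 1 - 2 * v)) at_bot \<and> (H \<longlongrightarrow> (1, 1)) at_top \<and>
      (\<forall>K. traveling_wave v K \<and> nonconstant K \<and> (K \<longlongrightarrow> (1, 1)) at_top \<longrightarrow>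
        (\<exists>s. K = (\<lambda>x. G (x + s)) \<or> K = (\<lambda>x. H (x + s))))"
proof -
  from \<open>0 < v\<close> have "- v < 0"
    by simp
  from waves_leaving_minus_one[OF this] obtain G H where
    G: "traveling_wave (- v) G" "nonconstant G"
      "(G \<longlongrightarrow> (-1, -1)) at_bot" "(G \<longlongrightarrow> (-2 * - v - 1, -6 * - v - 1)) at_top"
    and H: "traveling_wave (- v) H" "nonconstant H"
      "(H \<longlongrightarrow> (-1, -1)) at_bot" "(H \<longlongrightarrow> (-6 * - v - 1, -2 * - v - 1)) at_top"
    and unique: "\<And>K. traveling_wave (- v) K \<and> nonconstant K \<and> (K \<longlongrightarrow> (-1, -1)) at_bot \<Longrightarrow>
      \<exists>s. K = (\<lambda>x. G (x + s)) \<or> K = (\<lambda>x. H (x + s))"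
    by blast
  show ?thesis
  proof (rule exI[of _ "\<lambda>x. - G (- x)"], rule exI[of _ "\<lambda>x. - H (- x)"], intro conjI allI impI)
    show "traveling_wave v (\<lambda>x. - G (- x))" "traveling_wave v (\<lambda>x. - H (- x))"
      using traveling_wave_reflect[OF G(1)] traveling_wave_reflect[OF H(1)] by simp_all
    show "nonconstant (\<lambda>x. - G (- x))" "nonconstant (\<lambda>x. - H (- x))"
      using G(2) H(2) by (simp_all add: nonconstant_reflect)
    show "((\<lambda>x. - G (- x)) \<longlongrightarrow> (1 - 2 * v, 1 - 6 * v)) at_bot"
      "((\<lambda>x. - H (- x)) \<longlongrightarrow> (1 - 6 * v, 1 - 2 * v)) at_bot"
      using tendsto_reflect_at_bot[OF G(4)] tendsto_reflect_at_bot[OF H(4)] by simp_all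
    show "((\<lambda>x. - G (- x)) \<longlongrightarrow> (1, 1)) at_top" "((\<lambda>x. - H (- x)) \<longlongrightarrow> (1, 1)) at_top"
      using tendsto_reflect_at_top[OF G(3)] tendsto_reflect_at_top[OF H(3)] by simp_all
    fix K assume K: "traveling_wave v K \<and> nonconstant K \<and> (K \<longlongrightarrow> (1, 1)) at_top"
    then have "traveling_wave (- v) (\<lambda>x. - K (- x))" "nonconstant (\<lambda>x. - K (- x))"
      by (simp_all add: traveling_wave_reflect nonconstant_reflect)
    moreover have "((\<lambda>x. - K (- x)) \<longlongrightarrow> (-1, -1)) at_bot"
      using tendsto_reflect_at_bot[of K "(1, 1)"] K by simp
    ultimately obtain s where "(\<lambda>x. - K (- x)) = (\<lambda>x. G (x + s)) \<or> (\<lambda>x. - K (- x)) = (\<lambda>x. H (x + s))"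
      using unique by blast
    then have "K = (\<lambda>x. - G (- (x + - s))) \<or> K = (\<lambda>x. - H (- (x + - s)))"
      unfolding fun_eq_iff by (metis minus_add_distrib minus_minus add.commute)
    then show "\<exists>s. K = (\<lambda>x. - G (- (x + s))) \<or> K = (\<lambda>x. - H (- (x + s)))"
      by blast
  qed
qed

lemma stationary_reaching_one:
  assumes "traveling_wave 0 g" "(g \<longlongrightarrow> (1, 1)) at_top"
  shows "g y = (1, 1)"
proof -
  have "- g (- (- y)) = (-1, -1)"
    using traveling_wave_reflect[OF assms(1)] tendsto_reflect_at_bot[OF assms(2)]
    by (intro stationary_leaving_minus_one) simp_all
  then have "g y = - (-1, -1)"
    by (metis minus_minus)
  then show ?thesis
    by simp
qed

lemma constant_if_reaching_one_neg_speed: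
  assumes "v < 0" "traveling_wave v g" "(g \<longlongrightarrow> (1, 1)) at_top"
  shows "g y = (1, 1)"
proof -
  have "- g (- (- y)) = (-1, -1)"
    using assms(1) traveling_wave_reflect[OF assms(2)] tendsto_reflect_at_bot[OF assms(3)]
    by (intro constant_if_leaving_minus_one_pos_speed[of "- v"]) simp_all
  then have "g y = - (-1, -1)"
    by (metis minus_minus)
  then show ?thesis
    by simp
qed

theorem theorem3:
  shows
  "(\<forall>v::real. v < 0 \<longrightarrow>
      (\<exists>G H. traveling_wave v G \<and> nonconstant G \<and>
             (G \<longlongrightarrow> (-1, -1)) at_bot \<and> (G \<longlongrightarrow> (-2 * v - 1, -6 * v - 1)) at_top \<and>
             traveling_wave v H \<and> nonconstant H \<and>
             (H \<longlongrightarrow> (-1, -1)) at_bot \<and> (H \<longlongrightarrow> (-6 * v - 1, -2 * v - 1)) at_top \<and>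
             (\<forall>K. traveling_wave v K \<and> nonconstant K \<and> (K \<longlongrightarrow> (-1, -1)) at_bot \<longrightarrow>
                  (\<exists>s. K = (\<lambda>x. G (x + s)) \<or> K = (\<lambda>x. H (x + s))))))
   \<and> (\<forall>g. traveling_wave 0 g \<and> (g \<longlongrightarrow> (-1, -1)) at_bot \<longrightarrow> (\<forall>y. g y = (-1, -1)))
   \<and> (\<forall>v::real. v > 0 \<longrightarrow>
      (\<forall>g. traveling_wave v g \<and> (g \<longlongrightarrow> (-1, -1)) at_bot \<longrightarrow> \<not> nonconstant g))
   \<and> (\<forall>v::real. v > 0 \<longrightarrow>
      (\<exists>G H. traveling_wave v G \<and> nonconstant G \<and>
             (G \<longlongrightarrow> ((1 - 2 * v), (1 - 6 * v))) at_bot \<and> (G \<longlongrightarrow> (1, 1)) at_top \<and>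
             traveling_wave v H \<and> nonconstant H \<and>
             (H \<longlongrightarrow> ((1 - 6 * v), (1 - 2 * v))) at_bot \<and> (H \<longlongrightarrow> (1, 1)) at_top \<and>
             (\<forall>K. traveling_wave v K \<and> nonconstant K \<and> (K \<longlongrightarrow> (1, 1)) at_top \<longrightarrow>
                  (\<exists>s. K = (\<lambda>x. G (x + s)) \<or> K = (\<lambda>x. H (x + s))))))
   \<and> (\<forall>g. traveling_wave 0 g \<and> (g \<longlongrightarrow> (1, 1)) at_top \<longrightarrow> (\<forall>y. g y = (1, 1)))
   \<and> (\<forall>v::real. v < 0 \<longrightarrow>
      (\<forall>g. traveling_wave v g \<and> (g \<longlongrightarrow> (1, 1)) at_top \<longrightarrow> \<not> nonconstant g))"
  apply (intro conjI allI impI; (elim conjE)?)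
  subgoal by (rule waves_leaving_minus_one)
  subgoal by (rule stationary_leaving_minus_one)
  subgoal by (metis nonconstant_def constant_if_leaving_minus_one_pos_speed)
  subgoal by (rule waves_reaching_one)
  subgoal by (rule stationary_reaching_one)
  subgoal by (metis nonconstant_def constant_if_reaching_one_neg_speed)
  done

end
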